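(* Let $\delta:\mathbb{R}_+\to\mathbb{R}_+\cup\{+\infty\}$ be such that $\phi(t)=\int_0^\infty\exp(tx-2\delta(x))\,dx$ is finite for all $t\in\mathbb{R}$, and set $\psi(t)=t\phi(t)$ for $t\ge0$ (an increasing function with inverse $\psi^{-1}$). Let $\sigma$ be a probability measure on $\mathbb{R}$ with $d\sigma=e^{-g(x)}dx$, where $g:\mathbb{R}\to\mathbb{R}\cup\{+\infty\}$ satisfies $\frac{g(x)+g(y)}{2}-g(\frac{x+y}{2})\ge\delta(|x-y|)\ge0$ for all $x,y\in\mathbb{R}$. Then for every Borel $A\subset\mathbb{R}$, $$\sigma^+(A)\ \ge\ \widetilde{\sigma(A)}\;\psi^{-1}\Big(\frac{1}{2\widetilde{\sigma(A)}}\Big).$$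
   Context: $\sigma^+(A)=\liminf_{\varepsilon\to0^+}\frac{\sigma(A_\varepsilon)-\sigma(A)}{\varepsilon}$ with $A_\varepsilon=\{x:\exists y\in A,|x-y|<\varepsilon\}$; $\widetilde{\sigma(A)}=\min(\sigma(A),1-\sigma(A))$. The left-hand side of the convexity condition is $+\infty$ whenever $g(x)$ or $g(y)$ is $+\infty$. *)

theory Defs
  imports "HOL-Probability.Probability"
begin

definition phi_integrand :: "(real \<Rightarrow> ereal) \<Rightarrow> real \<Rightarrow> real \<Rightarrow> ennreal" where
  "phi_integrand \<delta> t x =
     (if \<delta> x = \<infinity> then 0 else ennreal (exp (t * x - 2 * real_of_ereal (\<delta> x))))"

definition phi :: "(real \<Rightarrow> ereal) \<Rightarrow> real \<Rightarrow> ennreal" where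
  "phi \<delta> t = (\<integral>\<^sup>+ x \<in> {0..}. phi_integrand \<delta> t x \<partial>lborel)"

text \<open>psi(t) = t phi(t) (used for t >= 0, where phi is assumed finite).\<close>
definition psi :: "(real \<Rightarrow> ereal) \<Rightarrow> real \<Rightarrow> real" where
  "psi \<delta> t = t * enn2real (phi \<delta> t)"

definition dens :: "(real \<Rightarrow> ereal) \<Rightarrow> real \<Rightarrow> ennreal" where
  "dens g x = (if g x = \<infinity> then 0 else ennreal (exp (- real_of_ereal (g x))))"

definition sigma_g :: "(real \<Rightarrow> ereal) \<Rightarrow> real measure" where
  "sigma_g g = density lborel (dens g)"

definition nbhd :: "real set \<Rightarrow> real \<Rightarrow> real set" where
  "nbhd A \<epsilon> = {x. \<exists>y\<in>A. \<bar>x - y\<bar> < \<epsilon>}"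

definition boundary_measure :: "real measure \<Rightarrow> real set \<Rightarrow> ereal" where
  "boundary_measure M A =
     Liminf (at_right 0) (\<lambda>\<epsilon>. ereal ((measure M (nbhd A \<epsilon>) - measure M A) / \<epsilon>))"

definition tilde :: "real \<Rightarrow> real" where
  "tilde s = min s (1 - s)"

end

theory Submission
  imports Defs
begin

text \<open>
  The potential g is midpoint convex and measurable. By a Steinhaus argument it is bounded above on
  some interval, hence (Bernstein-Doetsch) continuous and convex on the interior of its domain, with
  a supporting line at every point y there. Its \<delta>-convexity then bounds e^(-g) beyond y by
  e^(-g y) e^(-v s - 2 \<delta>(s)), v the supporting slope, so the two tails of \<sigma> at y are at most
  e^(-g y) \<phi>(\<plusminus>v). Combined with \<psi>(u) = 1/(2t), this gives the density profile
  e^(-g y) \<ge> u min(F y, t, 1 - F y) with F the distribution function, and therefore every interval of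
  length \<epsilon> carries mass at least c min(F, t, 1 - F) at its endpoints, c = \<epsilon> u/(1 + \<epsilon> u).
  Cutting the line at the t- and (1 - t)-quantiles and looking at the gaps of the open set A_\<epsilon>
  turns this into \<sigma>(A_\<epsilon> - A) \<ge> c t/(1 + c) = \<epsilon> u t/(1 + 2 \<epsilon> u), and \<epsilon> \<rightarrow> 0 gives
  \<sigma>^+(A) \<ge> t u.
\<close>

section \<open>Sums of compact sets of positive measure\<close>

lemma emeasure_lebesgue_eq_lborel:
  assumes "S \<in> sets borel"
  shows "emeasure lebesgue S = emeasure lborel S"
  using assms by (simp add: emeasure_completion main_part_sets)

lemma Steinhaus_translate_overlap:
  fixes L :: "real set"
  assumes L: "compact L" and pos: "emeasure lborel L > 0"
  obtains r where "r > 0" "\<And>d. \<bar>d\<bar> < r \<Longrightarrow> L \<inter> (+) d ` L \<noteq> {}"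
proof -
  have Llm: "L \<in> lmeasurable" using L by (rule lmeasurable_compact)
  have "emeasure lebesgue L > 0"
    using L pos by (simp add: emeasure_lebesgue_eq_lborel borel_closed compact_imp_closed)
  then have mLpos: "measure lebesgue L > 0" using Llm by (simp add: emeasure_eq_measure2)
  then have Lne: "L \<noteq> {}" by auto
  obtain V where V: "open V" "L \<subseteq> V" "V - L \<in> lmeasurable"
      "emeasure lebesgue (V - L) < ennreal (measure lebesgue L)"
    using sets_lebesgue_outer_open[of L "measure lebesgue L"] Llm mLpos by (auto simp: fmeasurableD)
  have VL: "V = L \<union> (V - L)" using V(2) by auto
  have Vlm: "V \<in> lmeasurable" using Llm V(3) VL by (metis fmeasurable.Un)
  have "measure lebesgue (V - L) < measure lebesgue L"
    using V(3,4) by (metis emeasure_eq_measure2 ennreal_less_iff measure_nonneg)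
  moreover have "measure lebesgue V = measure lebesgue L + measure lebesgue (V - L)"
    using measure_Un3[OF Llm V(3)] VL by (simp add: Int_Diff)
  ultimately have small_V: "measure lebesgue V < 2 * measure lebesgue L" by simp
  have "V \<noteq> UNIV" using Vlm by auto
  then have "- V \<noteq> {}" by auto
  define r where "r = setdist L (- V)"
  have "r > 0"
    unfolding r_def using L V(1,2) \<open>- V \<noteq> {}\<close> Lne by (subst setdist_gt_0_compact_closed) auto
  moreover have "L \<inter> (+) d ` L \<noteq> {}" if d: "\<bar>d\<bar> < r" for d
  proof
    assume disjoint: "L \<inter> (+) d ` L = {}"
    have shift: "(+) d ` L \<subseteq> V"
    proof (rule subsetI, rule ccontr)
      fix y assume "y \<in> (+) d ` L" "y \<notin> V"
      then obtain x where "x \<in> L" "y = d + x" "y \<in> - V" by blast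
      then have "r \<le> dist x y" unfolding r_def by (intro setdist_le_dist)
      with d \<open>y = d + x\<close> show False by (simp add: dist_real_def)
    qed
    have dlm: "(+) d ` L \<in> lmeasurable"
      using L by (intro lmeasurable_compact compact_translation)
    have "2 * measure lebesgue L = measure lebesgue (L \<union> (+) d ` L)"
      using measure_Un3[OF Llm dlm] disjoint by (simp add: measure_translation)
    also have "\<dots> \<le> measure lebesgue V"
      using V(2) shift Vlm Llm dlm by (intro measure_mono_fmeasurable) (auto simp: fmeasurableD)
    finally show False using small_V by simp
  qed
  ultimately show ?thesis using that by blast
qed

text \<open>The self-convolution of the indicator of K has total mass (\<mu> K)^2 > 0.\<close>
lemma exists_reflection_overlap:
  fixes K :: "real set"
  assumes K: "compact K" and pos: "emeasure lborel K > 0"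
  obtains c where "emeasure lborel (K \<inter> (\<lambda>x. c - x) -` K) > 0"
proof -
  have [measurable]: "K \<in> sets borel" using K by (simp add: borel_closed compact_imp_closed)
  have overlap: "emeasure lborel (K \<inter> (\<lambda>x. c - x) -` K)
      = (\<integral>\<^sup>+x. indicator K x * indicator K (c - x) \<partial>lborel)" for c
  proof -
    have "(\<lambda>x. c - x) -` K \<in> sets borel"
      using K by (intro borel_closed continuous_closed_vimage)
        (auto simp: compact_imp_closed intro!: continuous_intros)
    then have "emeasure lborel (K \<inter> (\<lambda>x. c - x) -` K)
        = (\<integral>\<^sup>+x. indicator (K \<inter> (\<lambda>x. c - x) -` K) x \<partial>lborel)"
      by (intro nn_integral_indicator[symmetric]) simp
    then show ?thesis by (simp add: indicator_inter_arith indicator_vimage)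
  qed
  have inner: "(\<integral>\<^sup>+c. indicator K (c - x) \<partial>lborel) = emeasure lborel K" for x :: real
    using nn_integral_real_affine[of "indicator K" 1 "-x"] by simp
  have "(\<integral>\<^sup>+c. emeasure lborel (K \<inter> (\<lambda>x. c - x) -` K) \<partial>lborel)
      = (\<integral>\<^sup>+x. (\<integral>\<^sup>+c. indicator K x * indicator K (c - x) \<partial>lborel) \<partial>lborel)"
    unfolding overlap by (rule lborel_pair.Fubini') measurable
  also have "\<dots> = emeasure lborel K * emeasure lborel K"
    by (simp add: nn_integral_cmult inner nn_integral_multc)
  finally have "(\<integral>\<^sup>+c. emeasure lborel (K \<inter> (\<lambda>x. c - x) -` K) \<partial>lborel) \<noteq> 0"
    using pos by simp
  then have "\<exists>c. emeasure lborel (K \<inter> (\<lambda>x. c - x) -` K) \<noteq> 0"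
    by (rule contrapos_np) simp
  then show ?thesis using that by (auto simp: zero_less_iff_neq_zero)
qed

lemma sumset_contains_interval:
  fixes K :: "real set"
  assumes K: "compact K" and pos: "emeasure lborel K > 0"
  obtains c r where "r > 0" "\<And>y. \<bar>y - c\<bar> < r \<Longrightarrow> \<exists>x\<in>K. y - x \<in> K"
proof -
  obtain c where c: "emeasure lborel (K \<inter> (\<lambda>x. c - x) -` K) > 0"
    using exists_reflection_overlap[OF assms] .
  have "closed ((\<lambda>x. c - x) -` K)"
    using K by (intro continuous_closed_vimage) (auto simp: compact_imp_closed intro!: continuous_intros)
  then have "compact (K \<inter> (\<lambda>x. c - x) -` K)" by (rule compact_Int_closed[OF K])
  then obtain r where "r > 0" and r: "\<And>d. \<bar>d\<bar> < r \<Longrightarrow>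
      (K \<inter> (\<lambda>x. c - x) -` K) \<inter> (+) d ` (K \<inter> (\<lambda>x. c - x) -` K) \<noteq> {}"
    using Steinhaus_translate_overlap c by blast
  have sum: "\<exists>x\<in>K. y - x \<in> K" if y: "\<bar>y - c\<bar> < r" for y
  proof -
    obtain x where x: "x \<in> K \<inter> (\<lambda>x. c - x) -` K" "x \<in> (+) (y - c) ` (K \<inter> (\<lambda>x. c - x) -` K)"
      using r[OF y] by blast
    then obtain x' where "c - x' \<in> K" "x = y - c + x'" by blast
    then have "y - x \<in> K" by simp
    with x(1) show ?thesis by blast
  qed
  show ?thesis by (rule that[OF \<open>r > 0\<close> sum])
qed

lemma exists_compact_subset_emeasure_pos:
  fixes S :: "real set"
  assumes S: "S \<in> sets borel" "S \<subseteq> {a..b}" and pos: "emeasure lborel S > 0"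
  obtains T where "compact T" "T \<subseteq> S" "emeasure lborel T > 0"
proof -
  have Slm: "S \<in> lmeasurable" by (rule fmeasurableI2[of "{a..b}"]) (use S in auto)
  have "emeasure lebesgue S > 0" using S pos by (simp add: emeasure_lebesgue_eq_lborel)
  then have mS: "measure lebesgue S > 0" using Slm by (simp add: emeasure_eq_measure2)
  obtain T where T: "closed T" "T \<subseteq> S" "S - T \<in> lmeasurable"
      "emeasure lebesgue (S - T) < ennreal (measure lebesgue S / 2)"
    using sets_lebesgue_inner_closed[of S "measure lebesgue S / 2"] Slm mS by (auto simp: fmeasurableD)
  have "compact (T \<inter> {a..b})" by (rule closed_Int_compact[OF T(1) compact_Icc])
  moreover have "T \<inter> {a..b} = T" using T(2) S(2) by auto
  ultimately have "compact T" by simp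
  then have Tlm: "T \<in> lmeasurable" by (rule lmeasurable_compact)
  have "measure lebesgue (S - T) < measure lebesgue S / 2"
    using T(3,4) by (metis emeasure_eq_measure2 ennreal_less_iff measure_nonneg)
  moreover have "measure lebesgue (S - T) = measure lebesgue S - measure lebesgue T"
    using T(2) Slm Tlm by (intro measure_Diff) (auto simp: fmeasurable_def)
  ultimately have "measure lebesgue T > 0" using mS by linarith
  then have "emeasure lebesgue T > 0" using Tlm by (simp add: emeasure_eq_measure2)
  then have "emeasure lborel T > 0" using T(1) by (simp add: emeasure_lebesgue_eq_lborel borel_closed)
  with \<open>compact T\<close> T(2) show ?thesis by (rule that)
qed

section \<open>Midpoint convex functions\<close>

lemma exists_inverse_pow2_less:
  fixes e :: real
  assumes "0 < e"
  obtains n :: nat where "1 / 2 ^ n < e"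
  using real_arch_pow_inv[OF assms, of "1/2"] that by (auto simp: power_one_over)

lemma ceiling_dyadic_bounds:
  fixes t :: real
  assumes "0 \<le> t" "t \<le> 1"
  shows "nat \<lceil>t * 2 ^ n\<rceil> \<le> 2 ^ n" "t \<le> real (nat \<lceil>t * 2 ^ n\<rceil>) / 2 ^ n"
    "real (nat \<lceil>t * 2 ^ n\<rceil>) / 2 ^ n < t + 1 / 2 ^ n"
proof -
  have "t * 2 ^ n \<le> 2 ^ n" using assms by simp
  then have "\<lceil>t * 2 ^ n\<rceil> \<le> 2 ^ n" by (metis ceiling_le_iff of_int_numeral of_int_power)
  then show "nat \<lceil>t * 2 ^ n\<rceil> \<le> 2 ^ n" by (simp add: nat_le_iff)
  have "real (nat \<lceil>t * 2 ^ n\<rceil>) = of_int \<lceil>t * 2 ^ n\<rceil>" using assms by simp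
  then show "t \<le> real (nat \<lceil>t * 2 ^ n\<rceil>) / 2 ^ n" "real (nat \<lceil>t * 2 ^ n\<rceil>) / 2 ^ n < t + 1 / 2 ^ n"
    by (simp_all add: field_simps) linarith+
qed

lemma ceiling_dyadic_tendsto:
  fixes t :: real
  assumes "0 \<le> t" "t \<le> 1"
  shows "(\<lambda>n. real (nat \<lceil>t * 2 ^ n\<rceil>) / 2 ^ n) \<longlonglongrightarrow> t"
proof (rule tendsto_sandwich[of "\<lambda>_. t" _ _ "\<lambda>n. t + 1 / 2 ^ n"])
  show "\<forall>\<^sub>F n in sequentially. t \<le> real (nat \<lceil>t * 2 ^ n\<rceil>) / 2 ^ n"
    using ceiling_dyadic_bounds(2)[OF assms] by (intro always_eventually) auto
  show "\<forall>\<^sub>F n in sequentially. real (nat \<lceil>t * 2 ^ n\<rceil>) / 2 ^ n \<le> t + 1 / 2 ^ n"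
    using ceiling_dyadic_bounds(3)[OF assms] by (intro always_eventually allI less_imp_le)
  have "(\<lambda>n. t + 1 / 2 ^ n) \<longlonglongrightarrow> t + 0"
    by (intro tendsto_add tendsto_const LIMSEQ_divide_realpow_zero) simp
  then show "(\<lambda>n. t + 1 / 2 ^ n) \<longlonglongrightarrow> t" by simp
qed simp

locale midpoint_convex =
  fixes g :: "real \<Rightarrow> ereal"
  assumes not_MInf: "\<And>x. g x \<noteq> -\<infinity>"
    and midpoint_le: "\<And>x y. g x \<noteq> \<infinity> \<Longrightarrow> g y \<noteq> \<infinity> \<Longrightarrow> g ((x + y) / 2) \<le> (g x + g y) / 2"
begin

definition real_g :: "real \<Rightarrow> real" where
  "real_g x = real_of_ereal (g x)"

definition dom_interior :: "real set" where
  "dom_interior = {x. \<exists>a b. a < x \<and> x < b \<and> g a \<noteq> \<infinity> \<and> g b \<noteq> \<infinity>}"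

definition bounded_above_near :: "real \<Rightarrow> bool" where
  "bounded_above_near x \<longleftrightarrow> (\<exists>r>0. \<exists>B. \<forall>y. \<bar>y - x\<bar> < r \<longrightarrow> g y \<le> ereal B)"

lemma ereal_real_g: "g x \<noteq> \<infinity> \<Longrightarrow> g x = ereal (real_g x)"
  using not_MInf[of x] by (cases "g x") (auto simp: real_g_def)

lemma real_g_le_iff: "g x \<le> ereal B \<longleftrightarrow> g x \<noteq> \<infinity> \<and> real_g x \<le> B"
proof (cases "g x = \<infinity>")
  case False
  then show ?thesis using ereal_real_g[OF False] by simp
qed simp

lemma midpoint_real_g:
  assumes "g x \<noteq> \<infinity>" "g y \<noteq> \<infinity>"
  shows "g ((x + y) / 2) \<noteq> \<infinity>" "real_g ((x + y) / 2) \<le> (real_g x + real_g y) / 2"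
proof -
  have "g ((x + y) / 2) \<le> ereal ((real_g x + real_g y) / 2)"
    using midpoint_le[OF assms] ereal_real_g[OF assms(1)] ereal_real_g[OF assms(2)] by simp
  then show "g ((x + y) / 2) \<noteq> \<infinity>" "real_g ((x + y) / 2) \<le> (real_g x + real_g y) / 2"
    unfolding real_g_le_iff by auto
qed

lemma dyadic_convex:
  fixes k n :: nat
  assumes "g x \<noteq> \<infinity>" "g y \<noteq> \<infinity>" "k \<le> 2 ^ n"
  shows "g (x + real k / 2 ^ n * (y - x)) \<noteq> \<infinity> \<and>
    real_g (x + real k / 2 ^ n * (y - x)) \<le> real_g x + real k / 2 ^ n * (real_g y - real_g x)"
  using assms(3)
proof (induction n arbitrary: k)
  case 0
  then have "k = 0 \<or> k = 1" by auto
  then show ?case using assms by auto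
next
  case (Suc n)
  define p where "p j = x + real j / 2 ^ n * (y - x)" for j :: nat
  show ?case
  proof (cases "even k")
    case True
    then obtain j where "k = 2 * j" by blast
    then show ?thesis using Suc by (simp add: field_simps)
  next
    case False
    then obtain j where k: "k = 2 * j + 1" by (metis oddE)
    have "j \<le> 2 ^ n" "Suc j \<le> 2 ^ n" using Suc.prems k by auto
    then have fin: "g (p j) \<noteq> \<infinity>" "g (p (Suc j)) \<noteq> \<infinity>"
      and le: "real_g (p j) \<le> real_g x + real j / 2 ^ n * (real_g y - real_g x)"
        "real_g (p (Suc j)) \<le> real_g x + real (Suc j) / 2 ^ n * (real_g y - real_g x)"
      using Suc.IH unfolding p_def by fastforce+
    have mid: "x + real k / 2 ^ Suc n * (y - x) = (p j + p (Suc j)) / 2"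
      unfolding p_def k by (simp add: field_simps)
    have "real_g ((p j + p (Suc j)) / 2) \<le> (real_g (p j) + real_g (p (Suc j))) / 2"
      by (rule midpoint_real_g(2)[OF fin])
    also have "\<dots> \<le> ((real_g x + real j / 2 ^ n * (real_g y - real_g x))
        + (real_g x + real (Suc j) / 2 ^ n * (real_g y - real_g x))) / 2"
      using le by (intro divide_right_mono add_mono) auto
    also have "\<dots> = real_g x + real k / 2 ^ Suc n * (real_g y - real_g x)"
      unfolding k by (simp add: field_simps)
    finally show ?thesis unfolding mid using midpoint_real_g(1)[OF fin] by simp
  qed
qed

lemma dom_interior_between:
  "x \<in> dom_interior \<Longrightarrow> y \<in> dom_interior \<Longrightarrow> x \<le> z \<Longrightarrow> z \<le> y \<Longrightarrow> z \<in> dom_interior"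
  unfolding dom_interior_def by (auto, meson le_less_trans less_le_trans)

lemma convex_dom_interior: "convex dom_interior"
  unfolding is_interval_convex_1[symmetric] is_interval_1 using dom_interior_between by blast

lemma dom_interior_neighbours:
  assumes "y \<in> dom_interior"
  obtains a b where "a \<in> dom_interior" "b \<in> dom_interior" "a < y" "y < b"
proof -
  obtain a b where ab: "a < y" "y < b" "g a \<noteq> \<infinity>" "g b \<noteq> \<infinity>"
    using assms unfolding dom_interior_def by blast
  then have "(a + y) / 2 \<in> dom_interior" "(y + b) / 2 \<in> dom_interior"
    unfolding dom_interior_def by (intro CollectI exI[of _ a] exI[of _ b], simp)+
  with ab show ?thesis using that[of "(a + y) / 2" "(y + b) / 2"] by simp
qed

lemma bounded_above_homothetic_ball:
  fixes k n :: nat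
  assumes B: "\<And>y. \<bar>y - p\<bar> < r \<Longrightarrow> g y \<le> ereal B" and q: "g q \<noteq> \<infinity>"
    and k: "0 < k" "k \<le> 2 ^ n"
    and y: "\<bar>y - (q + real k / 2 ^ n * (p - q))\<bar> < real k / 2 ^ n * r"
  shows "g y \<le> ereal (max B (real_g q))"
proof -
  define lam where "lam = real k / 2 ^ n"
  define h where "h = (y - q) / lam - (p - q)"
  have lam: "0 < lam" "lam \<le> 1" using k by (simp_all add: lam_def field_simps)
  have "lam * h = y - (q + lam * (p - q))" unfolding h_def using lam by (simp add: field_simps)
  then have "lam * \<bar>h\<bar> = \<bar>y - (q + lam * (p - q))\<bar>" using lam by (simp add: abs_mult flip: \<open>lam * h = _\<close>)
  also have "\<dots> < lam * r" using y unfolding lam_def .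
  finally have "\<bar>h\<bar> < r" using lam by simp
  then have fin: "g (p + h) \<noteq> \<infinity>" and le: "real_g (p + h) \<le> B"
    using B[of "p + h"] unfolding real_g_le_iff by auto
  have "y = q + real k / 2 ^ n * (p + h - q)" unfolding h_def lam_def[symmetric] using lam by (simp add: field_simps)
  then have "g y \<noteq> \<infinity>" "real_g y \<le> real_g q + lam * (real_g (p + h) - real_g q)"
    using dyadic_convex[OF q fin k(2)] unfolding lam_def by simp_all
  moreover have "real_g q + lam * (real_g (p + h) - real_g q) = (1 - lam) * real_g q + lam * real_g (p + h)"
    by (simp add: algebra_simps)
  moreover have "(1 - lam) * real_g q + lam * real_g (p + h) \<le> max B (real_g q)"
    using le lam by (intro convex_bound_le) auto
  ultimately show ?thesis unfolding real_g_le_iff by linarith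
qed

text \<open>By dyadic convex combinations with a point q of the domain, an upper bound on a ball around p
  spreads to the shrunken balls between q and p, and every point of the interior of the domain lies
  in one of them.\<close>
lemma bounded_above_near_dom_interior:
  assumes p: "bounded_above_near p" and x: "x \<in> dom_interior"
  shows "bounded_above_near x"
proof -
  obtain r B where r: "r > 0" and B: "\<And>y. \<bar>y - p\<bar> < r \<Longrightarrow> g y \<le> ereal B"
    using p unfolding bounded_above_near_def by blast
  obtain q l where q: "g q \<noteq> \<infinity>" "q \<noteq> x" and l: "0 < l" "l \<le> 1"
    and xq: "x - q = l * (p - q)"
  proof -
    obtain a b where ab: "a < x" "x < b" "g a \<noteq> \<infinity>" "g b \<noteq> \<infinity>"
      using x unfolding dom_interior_def by blast
    show ?thesis
    proof (cases "x \<le> p")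
      case True
      then show ?thesis using that[of a "(x - a) / (p - a)"] ab by (simp add: field_simps)
    next
      case False
      then show ?thesis using that[of b "(x - b) / (p - b)"] ab by (simp add: field_simps)
    qed
  qed
  have "p \<noteq> q" using xq q(2) by auto
  obtain n where n: "1 / 2 ^ n < l * r / (2 * \<bar>p - q\<bar>)"
    using exists_inverse_pow2_less[of "l * r / (2 * \<bar>p - q\<bar>)"] l r \<open>p \<noteq> q\<close> by auto
  define k where "k = nat \<lceil>l * 2 ^ n\<rceil>"
  define lam where "lam = real k / 2 ^ n"
  have k: "k \<le> 2 ^ n" "l \<le> lam" "lam < l + 1 / 2 ^ n"
    unfolding k_def lam_def using ceiling_dyadic_bounds[of l n] l by auto
  have "(lam - l) * \<bar>p - q\<bar> < l * r / (2 * \<bar>p - q\<bar>) * \<bar>p - q\<bar>"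
    using k(3) n \<open>p \<noteq> q\<close> by (intro mult_strict_right_mono) auto
  then have close: "(lam - l) * \<bar>p - q\<bar> < l * r / 2" using \<open>p \<noteq> q\<close> by simp
  have "g y \<le> ereal (max B (real_g q))" if y: "\<bar>y - x\<bar> < l * r / 2" for y
  proof (rule bounded_above_homothetic_ball[OF B q(1) _ k(1)])
    show "0 < k" using k(2) l unfolding lam_def by (auto intro: Nat.gr0I)
    have "\<bar>y - (q + lam * (p - q))\<bar> = \<bar>(y - x) + (l - lam) * (p - q)\<bar>"
      using xq by (simp add: algebra_simps)
    moreover have "\<bar>(l - lam) * (p - q)\<bar> = (lam - l) * \<bar>p - q\<bar>" using k(2) by (simp add: abs_mult)
    ultimately have "\<bar>y - (q + lam * (p - q))\<bar> \<le> \<bar>y - x\<bar> + (lam - l) * \<bar>p - q\<bar>"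
      using abs_triangle_ineq[of "y - x" "(l - lam) * (p - q)"] by linarith
    also have "\<dots> < lam * r"
      using y close mult_right_mono[OF k(2), of r] r by linarith
    finally show "\<bar>y - (q + real k / 2 ^ n * (p - q))\<bar> < real k / 2 ^ n * r" unfolding lam_def .
  qed
  then have "\<forall>y. \<bar>y - x\<bar> < l * r / 2 \<longrightarrow> g y \<le> ereal (max B (real_g q))" by blast
  moreover have "0 < l * r / 2" using l r by simp
  ultimately show ?thesis unfolding bounded_above_near_def by blast
qed

lemma real_g_oscillation:
  assumes B: "\<And>y. \<bar>y - x\<bar> < r \<Longrightarrow> g y \<le> ereal B" and s: "\<bar>s\<bar> < r / 2 ^ n"
  shows "\<bar>real_g (x + s) - real_g x\<bar> \<le> (B - real_g x) / 2 ^ n"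
proof -
  have fin: "g y \<noteq> \<infinity>" "real_g y \<le> B" if "\<bar>y - x\<bar> < r" for y
    using B[OF that] unfolding real_g_le_iff by auto
  have "0 < r / 2 ^ n" using s abs_ge_zero[of s] by linarith
  then have "r / 2 ^ n \<le> r" by (simp add: zero_less_divide_iff field_simps)
  have upper: "real_g (x + h) \<le> real_g x + (B - real_g x) / 2 ^ n" if h: "\<bar>h\<bar> < r / 2 ^ n" for h
  proof -
    have "\<bar>x + 2 ^ n * h - x\<bar> < r" using h by (simp add: field_simps abs_mult)
    then have "g (x + 2 ^ n * h) \<noteq> \<infinity>" "real_g (x + 2 ^ n * h) \<le> B" using fin by auto
    moreover have "x + real 1 / 2 ^ n * (x + 2 ^ n * h - x) = x + h" by simp
    ultimately have "real_g (x + h) \<le> real_g x + (real_g (x + 2 ^ n * h) - real_g x) / 2 ^ n"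
      using dyadic_convex[of x "x + 2 ^ n * h" 1 n] fin[of x] \<open>r / 2 ^ n \<le> r\<close> s by auto
    also have "\<dots> \<le> real_g x + (B - real_g x) / 2 ^ n"
      using \<open>real_g (x + 2 ^ n * h) \<le> B\<close> by (simp add: divide_right_mono)
    finally show ?thesis .
  qed
  have "g (x + s) \<noteq> \<infinity>" "g (x - s) \<noteq> \<infinity>" using fin s \<open>r / 2 ^ n \<le> r\<close> by auto
  then have "real_g x \<le> (real_g (x + s) + real_g (x - s)) / 2"
    using midpoint_real_g(2)[of "x + s" "x - s"] by simp
  then show ?thesis using upper[OF s] upper[of "- s"] s by simp
qed

lemma isCont_real_g:
  assumes "bounded_above_near x"
  shows "isCont real_g x"
  unfolding continuous_at_eps_delta
proof (intro allI impI)
  fix e :: real assume "e > 0"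
  obtain r B where r: "r > 0" and B: "\<And>y. \<bar>y - x\<bar> < r \<Longrightarrow> g y \<le> ereal B"
    using assms unfolding bounded_above_near_def by blast
  define C where "C = B - real_g x"
  have "C \<ge> 0" using B[of x] r unfolding C_def real_g_le_iff by simp
  obtain n where n: "1 / 2 ^ n < e / (C + 1)"
    using exists_inverse_pow2_less[of "e / (C + 1)"] \<open>e > 0\<close> \<open>C \<ge> 0\<close> by auto
  have "C / 2 ^ n \<le> (C + 1) * (1 / 2 ^ n)" by (simp add: divide_right_mono)
  also have "\<dots> < e" using n \<open>C \<ge> 0\<close> by (simp add: field_simps)
  finally have "C / 2 ^ n < e" .
  moreover have "\<bar>real_g y - real_g x\<bar> \<le> C / 2 ^ n" if "dist y x < r / 2 ^ n" for y
    using real_g_oscillation[where x = x and r = r and B = B and s = "y - x" and n = n, OF B] that unfolding C_def by (simp add: dist_real_def)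
  ultimately show "\<exists>d>0. \<forall>y. dist y x < d \<longrightarrow> dist (real_g y) (real_g x) < e"
    using r by (intro exI[of _ "r / 2 ^ n"]) (auto simp: dist_real_def intro: le_less_trans)
qed

text \<open>Some sublevel set of g contains a compact set T of positive measure. Midpoint convexity keeps g
  below the same level on (T + T)/2, which contains an interval.\<close>
lemma bounded_above_near_exists:
  assumes [measurable]: "g \<in> borel_measurable borel"
    and pos: "emeasure lborel {x. g x \<noteq> \<infinity>} \<noteq> 0"
  shows "\<exists>p. bounded_above_near p"
proof -
  define S where "S n = {x. \<bar>x\<bar> \<le> real n \<and> g x \<le> ereal (real n)}" for n :: nat
  have S_borel[measurable]: "S n \<in> sets borel" for n unfolding S_def by measurable
  have "{x. g x \<noteq> \<infinity>} \<subseteq> (\<Union>n. S n)"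
  proof
    fix x assume "x \<in> {x. g x \<noteq> \<infinity>}"
    moreover obtain n :: nat where "max \<bar>x\<bar> (real_g x) \<le> real n" using real_arch_simple by blast
    ultimately show "x \<in> (\<Union>n. S n)" unfolding S_def real_g_le_iff by auto
  qed
  then have "emeasure lborel (\<Union>n. S n) \<noteq> 0"
    using pos emeasure_mono[of "{x. g x \<noteq> \<infinity>}" "\<Union>n. S n" lborel] by auto
  moreover have "emeasure lborel (\<Union>n. S n) = 0" if "\<forall>n. emeasure lborel (S n) = 0"
    using that by (intro emeasure_UN_eq_0) auto
  ultimately obtain n where Sn_pos: "emeasure lborel (S n) > 0"
    by (auto simp: zero_less_iff_neq_zero)
  have "S n \<subseteq> {- real n..real n}" unfolding S_def by auto
  then obtain T where T: "compact T" "T \<subseteq> S n" "emeasure lborel T > 0"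
    by (rule exists_compact_subset_emeasure_pos[OF S_borel _ Sn_pos])
  obtain c r where r: "r > 0" and sum: "\<And>y. \<bar>y - c\<bar> < r \<Longrightarrow> \<exists>x\<in>T. y - x \<in> T"
    using sumset_contains_interval[OF T(1) T(3)] by blast
  have "g y \<le> ereal (real n)" if "\<bar>y - c / 2\<bar> < r / 2" for y
  proof -
    have "\<bar>2 * y - c\<bar> < r" using that unfolding abs_less_iff by linarith
    then obtain x where "x \<in> T" "2 * y - x \<in> T" using sum by blast
    then have "g x \<le> ereal (real n)" "g (2 * y - x) \<le> ereal (real n)" using T(2) unfolding S_def by auto
    then have "g ((x + (2 * y - x)) / 2) \<le> ereal (real n)"
      unfolding real_g_le_iff using midpoint_real_g by fastforce
    then show ?thesis by simp
  qed
  then have "bounded_above_near (c / 2)"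
    unfolding bounded_above_near_def using r
    by (intro exI[of _ "r / 2"] conjI exI[of _ "real n"] allI impI) auto
  then show ?thesis ..
qed

end

locale midpoint_convex_bounded = midpoint_convex +
  assumes bounded_somewhere: "\<exists>p. bounded_above_near p"
begin

lemma isCont_real_g_dom_interior: "x \<in> dom_interior \<Longrightarrow> isCont real_g x"
  using bounded_somewhere bounded_above_near_dom_interior isCont_real_g by blast

lemma finite_dom_interior:
  assumes "x \<in> dom_interior"
  shows "g x \<noteq> \<infinity>"
proof -
  obtain r B where "r > 0" "\<And>y. \<bar>y - x\<bar> < r \<Longrightarrow> g y \<le> ereal B"
    using bounded_somewhere bounded_above_near_dom_interior[OF _ assms]
    unfolding bounded_above_near_def by blast
  then have "g x \<le> ereal B" by simp
  then show ?thesis by auto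
qed

text \<open>Dyadic convexity passes to the limit by continuity.\<close>
lemma convex_on_real_g: "convex_on dom_interior real_g"
proof (rule convex_on_linorderI[OF _ convex_dom_interior])
  fix t x y :: real
  assume t: "0 < t" "t < 1" and xy: "x \<in> dom_interior" "y \<in> dom_interior" "x < y"
  define z where "z = x + t * (y - x)"
  define lam where "lam n = real (nat \<lceil>t * 2 ^ n\<rceil>) / 2 ^ n" for n :: nat
  have "lam \<longlonglongrightarrow> t" unfolding lam_def using t by (intro ceiling_dyadic_tendsto) auto
  then have "(\<lambda>n. x + lam n * (y - x)) \<longlonglongrightarrow> z"
    unfolding z_def by (intro tendsto_intros)
  moreover have "z \<in> dom_interior"
  proof -
    have "t * (y - x) \<le> y - x" using t xy(3) by (simp add: mult_left_le_one_le)
    then have "x \<le> z" "z \<le> y" unfolding z_def using t xy(3) by (simp, linarith)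
    then show ?thesis by (rule dom_interior_between[OF xy(1,2)])
  qed
  ultimately have lim_left: "(\<lambda>n. real_g (x + lam n * (y - x))) \<longlonglongrightarrow> real_g z"
    by (intro isCont_tendsto_compose[OF isCont_real_g_dom_interior])
  have lim_right: "(\<lambda>n. real_g x + lam n * (real_g y - real_g x))
      \<longlonglongrightarrow> real_g x + t * (real_g y - real_g x)"
    using \<open>lam \<longlonglongrightarrow> t\<close> by (intro tendsto_intros)
  have "real_g (x + lam n * (y - x)) \<le> real_g x + lam n * (real_g y - real_g x)" for n
  proof -
    have "nat \<lceil>t * 2 ^ n\<rceil> \<le> 2 ^ n" using ceiling_dyadic_bounds(1)[of t n] t by simp
    with dyadic_convex[OF finite_dom_interior[OF xy(1)] finite_dom_interior[OF xy(2)]]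
    show ?thesis unfolding lam_def by blast
  qed
  then have "real_g z \<le> real_g x + t * (real_g y - real_g x)"
    using LIMSEQ_le[OF lim_left lim_right] by blast
  then show "real_g ((1 - t) *\<^sub>R x + t *\<^sub>R y) \<le> (1 - t) * real_g x + t * real_g y"
    unfolding z_def by (simp add: algebra_simps)
qed

lemma supporting_line:
  assumes y: "y \<in> dom_interior"
  obtains v where "\<And>z. z \<in> dom_interior \<Longrightarrow> real_g y + v * (z - y) \<le> real_g z"
proof -
  have slope_mono: "(real_g y - real_g a) / (y - a) \<le> (real_g b - real_g y) / (b - y)"
    if "a \<in> dom_interior" "b \<in> dom_interior" "a < y" "y < b" for a b
  proof -
    have "(real_g a - real_g y) / (a - y) \<le> (real_g y - real_g b) / (y - b)"
      using convex_on_slope_le[OF convex_on_real_g that] by (rule order_trans)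
    moreover have "(real_g a - real_g y) / (a - y) = (real_g y - real_g a) / (y - a)"
      "(real_g y - real_g b) / (y - b) = (real_g b - real_g y) / (b - y)"
      by (metis minus_diff_eq minus_divide_divide)+
    ultimately show ?thesis by simp
  qed
  define L where "L = (\<lambda>a. (real_g y - real_g a) / (y - a)) ` {a \<in> dom_interior. a < y}"
  obtain a b where ab: "a \<in> dom_interior" "b \<in> dom_interior" "a < y" "y < b"
    using dom_interior_neighbours[OF y] .
  have "L \<noteq> {}" using ab unfolding L_def by auto
  have L_le: "s \<le> (real_g z - real_g y) / (z - y)" if "s \<in> L" "z \<in> dom_interior" "y < z" for s z
    using that slope_mono unfolding L_def by auto
  then have "bdd_above L" using ab by (intro bdd_aboveI) blast
  have "real_g y + Sup L * (z - y) \<le> real_g z" if z: "z \<in> dom_interior" for z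
  proof (cases z y rule: linorder_cases)
    case less
    then have "(real_g y - real_g z) / (y - z) \<le> Sup L"
      using z \<open>bdd_above L\<close> unfolding L_def by (intro cSup_upper) auto
    then show ?thesis using less by (simp add: divide_le_eq algebra_simps)
  next
    case greater
    then have "Sup L \<le> (real_g z - real_g y) / (z - y)"
      using z \<open>L \<noteq> {}\<close> L_le by (intro cSup_least) auto
    then show ?thesis using greater by (simp add: le_divide_eq algebra_simps)
  qed simp
  then show ?thesis by (rule that)
qed

end

section \<open>Distribution functions\<close>

lemma (in real_distribution) cdf_diff_le_measure_interval:
  assumes atomless: "\<And>x. measure M {x} = 0" and xy: "x \<in> {a..b}" "y \<in> {a..b}"
  shows "\<bar>cdf M y - cdf M x\<bar> \<le> measure M {a<..<b}"
proof -
  have diff: "cdf M q - cdf M p \<le> measure M {a<..<b}" if "a \<le> p" "p \<le> q" "q \<le> b" for p q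
  proof (cases "p = q")
    case False
    then have "cdf M q - cdf M p = measure M {p<..q}" using that by (intro cdf_diff_eq) auto
    also have "\<dots> \<le> measure M ({a<..<b} \<union> {b})" using that by (intro finite_measure_mono) auto
    also have "\<dots> \<le> measure M {a<..<b} + measure M {b}" by (intro measure_Un_le) auto
    finally show ?thesis using atomless by simp
  qed simp
  show ?thesis
  proof (cases "x \<le> y")
    case True
    then show ?thesis using diff[of x y] cdf_nondecreasing[OF True] xy by simp
  next
    case False
    then show ?thesis using diff[of y x] cdf_nondecreasing[of y x] xy by simp
  qed
qed

lemma (in real_distribution) measure_lessThan_eq_cdf:
  assumes atomless: "\<And>x. measure M {x} = 0"
  shows "measure M {..<x} = cdf M x"
proof -
  have "cdf M x = measure M ({..<x} \<union> {x})" unfolding cdf_def by (simp add: ivl_disj_un(2)[symmetric])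
  also have "\<dots> = measure M {..<x}" using atomless by (subst finite_measure_Union) auto
  finally show ?thesis ..
qed

lemma (in real_distribution) measure_atLeast_eq:
  assumes atomless: "\<And>x. measure M {x} = 0"
  shows "measure M {x..} = 1 - cdf M x"
proof -
  have "measure M {x..} = 1 - measure M {..<x}"
    using prob_compl[of "{..<x}"] by (simp add: Compl_eq_Diff_UNIV[symmetric])
  then show ?thesis using measure_lessThan_eq_cdf[OF atomless] by simp
qed

lemma (in real_distribution) exists_quantiles:
  assumes atomless: "\<And>x. measure M {x} = 0" and t: "0 < t" "t \<le> 1 - t"
  obtains z1 z2 where "z1 \<le> z2" "cdf M z1 = t" "cdf M z2 = 1 - t"
proof -
  have cont: "continuous_on {a..b} (cdf M)" for a b
    using isCont_cdf atomless by (intro continuous_at_imp_continuous_on) auto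
  have "eventually (\<lambda>x. cdf M x < t) at_bot"
    using cdf_lim_at_bot t(1) by (rule order_tendstoD)
  then obtain x0 where x0: "cdf M x0 < t" unfolding eventually_at_bot_linorder by blast
  have "eventually (\<lambda>x. 1 - t < cdf M x) at_top"
    using cdf_lim_at_top_prob t(1) by (intro order_tendstoD) auto
  then obtain x1 where x1: "1 - t < cdf M x1" unfolding eventually_at_top_linorder by blast
  have "x0 \<le> x1"
    using x0 x1 t cdf_nondecreasing[of x1 x0] by (cases "x0 \<le> x1") auto
  then obtain z1 where z1: "x0 \<le> z1" "z1 \<le> x1" "cdf M z1 = t"
    using IVT'[of "cdf M" x0 t x1] x0 x1 t cont by force
  then obtain z2 where z2: "z1 \<le> z2" "cdf M z2 = 1 - t"
    using IVT'[of "cdf M" z1 "1 - t" x1] x1 t cont by force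
  show ?thesis by (rule that[OF z2(1) z1(3) z2(2)])
qed

lemma min_trunc_lipschitz:
  fixes a b t :: real
  shows "min a (min t (1 - a)) - \<bar>b - a\<bar> \<le> min b (min t (1 - b))"
  by (auto simp: min_def abs_if)

section \<open>Neighbourhoods and the boundary measure\<close>

lemma open_nbhd: "open (nbhd A \<epsilon>)"
proof -
  have "nbhd A \<epsilon> = (\<Union>a\<in>A. ball a \<epsilon>)"
    unfolding nbhd_def by (auto simp: dist_real_def abs_minus_commute)
  then show ?thesis by auto
qed

lemma nbhd_borel[measurable]: "nbhd A \<epsilon> \<in> sets borel"
  using open_nbhd by simp

lemma in_nbhdI: "a \<in> A \<Longrightarrow> \<bar>y - a\<bar> < \<epsilon> \<Longrightarrow> y \<in> nbhd A \<epsilon>"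
  unfolding nbhd_def by blast

lemma subset_nbhd: "0 < \<epsilon> \<Longrightarrow> A \<subseteq> nbhd A \<epsilon>"
  using in_nbhdI[of _ A] by force

lemma not_in_nbhd_far: "e \<notin> nbhd A \<epsilon> \<Longrightarrow> a \<in> A \<Longrightarrow> \<epsilon> \<le> \<bar>e - a\<bar>"
  using in_nbhdI[of a A e \<epsilon>] by force

lemma nbhd_gap_right:
  assumes e: "e \<notin> nbhd A \<epsilon>" and a: "a \<in> A" "e \<le> a"
  obtains \<alpha> where "e \<le> \<alpha>" "\<alpha> + \<epsilon> \<le> a" "\<alpha> \<notin> nbhd A \<epsilon>" "{\<alpha><..a} \<subseteq> nbhd A \<epsilon>"
    "{\<alpha><..<\<alpha> + \<epsilon>} \<subseteq> nbhd A \<epsilon> - A"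
proof -
  define S where "S = - nbhd A \<epsilon> \<inter> {e..a}"
  have "closed S" unfolding S_def using open_nbhd by (intro closed_Int) auto
  moreover have "e \<in> S" "bdd_above S" using e a unfolding S_def by auto
  ultimately have "Sup S \<in> S" by (intro closed_contains_Sup) auto
  then have \<alpha>: "e \<le> Sup S" "Sup S \<le> a" "Sup S \<notin> nbhd A \<epsilon>" unfolding S_def by auto
  then have "Sup S + \<epsilon> \<le> a" using not_in_nbhd_far[OF _ a(1)] by force
  moreover have gap: "{Sup S<..a} \<subseteq> nbhd A \<epsilon>"
    using cSup_upper[OF _ \<open>bdd_above S\<close>] \<alpha>(1) unfolding S_def by force
  moreover have "{Sup S<..<Sup S + \<epsilon>} \<subseteq> nbhd A \<epsilon> - A"
    using gap calculation(1) not_in_nbhd_far[OF \<alpha>(3)] by force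
  ultimately show ?thesis using that \<alpha> by blast
qed

lemma nbhd_gap_left:
  assumes e: "e \<notin> nbhd A \<epsilon>" and a: "a \<in> A" "a \<le> e"
  obtains \<beta> where "\<beta> \<le> e" "a + \<epsilon> \<le> \<beta>" "\<beta> \<notin> nbhd A \<epsilon>" "{a..<\<beta>} \<subseteq> nbhd A \<epsilon>"
    "{\<beta> - \<epsilon><..<\<beta>} \<subseteq> nbhd A \<epsilon> - A"
proof -
  define S where "S = - nbhd A \<epsilon> \<inter> {a..e}"
  have "closed S" unfolding S_def using open_nbhd by (intro closed_Int) auto
  moreover have "e \<in> S" "bdd_below S" using e a unfolding S_def by auto
  ultimately have "Inf S \<in> S" by (intro closed_contains_Inf) auto
  then have \<beta>: "Inf S \<le> e" "a \<le> Inf S" "Inf S \<notin> nbhd A \<epsilon>" unfolding S_def by auto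
  then have "a + \<epsilon> \<le> Inf S" using not_in_nbhd_far[OF _ a(1)] by force
  moreover have gap: "{a..<Inf S} \<subseteq> nbhd A \<epsilon>"
    using cInf_lower[OF _ \<open>bdd_below S\<close>] \<beta>(1) unfolding S_def by force
  moreover have "{Inf S - \<epsilon><..<Inf S} \<subseteq> nbhd A \<epsilon> - A"
    using gap calculation(1) not_in_nbhd_far[OF \<beta>(3)] by force
  ultimately show ?thesis using that \<beta> by blast
qed

lemma boundary_measure_ge:
  assumes bound: "\<And>\<epsilon>. 0 < \<epsilon> \<Longrightarrow> \<epsilon> * l \<epsilon> \<le> measure M (nbhd A \<epsilon>) - measure M A"
    and lim: "(l \<longlongrightarrow> L) (at_right 0)"
  shows "ereal L \<le> boundary_measure M A"
proof -
  have "ereal L = Liminf (at_right 0) (\<lambda>\<epsilon>. ereal (l \<epsilon>))"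
    using lim by (intro lim_imp_Liminf[symmetric]) (auto intro: tendsto_ereal)
  also have "\<dots> \<le> boundary_measure M A"
    unfolding boundary_measure_def
  proof (intro Liminf_mono)
    show "\<forall>\<^sub>F \<epsilon> in at_right 0. ereal (l \<epsilon>) \<le> ereal ((measure M (nbhd A \<epsilon>) - measure M A) / \<epsilon>)"
      using eventually_at_right_less[of 0] by eventually_elim (use bound in \<open>simp add: pos_le_divide_eq mult.commute\<close>)
  qed
  finally show ?thesis .
qed

locale truncated_interval_mass = real_distribution M for M :: "real measure" +
  fixes \<epsilon> c t z1 z2 :: real
  assumes eps_pos: "0 < \<epsilon>" and c_nonneg: "0 \<le> c"
    and atomless: "\<And>x. measure M {x} = 0"
    and quantiles: "z1 \<le> z2" "cdf M z1 = t" "cdf M z2 = 1 - t"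
    and mass_right: "\<And>x. c * min (cdf M x) (min t (1 - cdf M x)) \<le> measure M {x<..<x + \<epsilon>}"
    and mass_left: "\<And>x. c * min (cdf M x) (min t (1 - cdf M x)) \<le> measure M {x - \<epsilon><..<x}"
begin

lemma t_le_one_minus_t: "t \<le> 1 - t"
  using cdf_nondecreasing[OF quantiles(1)] quantiles by simp

lemma trunc_below: "x \<le> z1 \<Longrightarrow> min (cdf M x) (min t (1 - cdf M x)) = measure M {..x}"
  using cdf_nondecreasing[of x z1] quantiles(2) t_le_one_minus_t unfolding cdf_def by auto

lemma trunc_between: "z1 \<le> x \<Longrightarrow> x \<le> z2 \<Longrightarrow> min (cdf M x) (min t (1 - cdf M x)) = t"
  using cdf_nondecreasing[of z1 x] cdf_nondecreasing[of x z2] quantiles by auto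

lemma trunc_above: "z2 \<le> x \<Longrightarrow> min (cdf M x) (min t (1 - cdf M x)) = measure M {x..}"
  using cdf_nondecreasing[of z2 x] quantiles(3) t_le_one_minus_t measure_atLeast_eq[OF atomless] by auto

context
  fixes A :: "real set"
  assumes A: "A \<in> sets borel"
begin

lemma measure_le_nbhd_diff: "P \<subseteq> nbhd A \<epsilon> - A \<Longrightarrow> measure M P \<le> measure M (nbhd A \<epsilon> - A)"
  using A by (intro finite_measure_mono) auto

lemma nbhd_diff_ge_crossing:
  assumes e: "z1 \<le> e" "e \<le> z2" "e \<notin> nbhd A \<epsilon>" and z: "z1 \<le> z" "z \<le> z2" "z \<in> nbhd A \<epsilon>"
  shows "c * t \<le> measure M (nbhd A \<epsilon> - A)"
proof -
  obtain a where a: "a \<in> A" "\<bar>z - a\<bar> < \<epsilon>" using z(3) unfolding nbhd_def by blast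
  have far: "\<epsilon> \<le> \<bar>e - a\<bar>" by (rule not_in_nbhd_far[OF e(3) a(1)])
  have "e \<noteq> z" using e(3) z(3) by blast
  then consider "e < z" | "z < e" by linarith
  then show ?thesis
  proof cases
    case 1
    then have "e \<le> a" using a(2) far by (auto simp: abs_if split: if_splits)
    then obtain \<alpha> where "e \<le> \<alpha>" "\<alpha> + \<epsilon> \<le> a" "\<alpha> \<notin> nbhd A \<epsilon>" "{\<alpha><..a} \<subseteq> nbhd A \<epsilon>"
      and P: "{\<alpha><..<\<alpha> + \<epsilon>} \<subseteq> nbhd A \<epsilon> - A"
      by (rule nbhd_gap_right[OF e(3) a(1)])
    moreover have "\<alpha> \<le> z2" using calculation(2) a(2) z(2) by (auto simp: abs_if split: if_splits)
    ultimately have "c * t \<le> measure M {\<alpha><..<\<alpha> + \<epsilon>}"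
      using mass_right[of \<alpha>] trunc_between[of \<alpha>] e(1) by simp
    also have "\<dots> \<le> measure M (nbhd A \<epsilon> - A)" by (rule measure_le_nbhd_diff[OF P])
    finally show ?thesis .
  next
    case 2
    then have "a \<le> e" using a(2) far by (auto simp: abs_if split: if_splits)
    then obtain \<beta> where "\<beta> \<le> e" "a + \<epsilon> \<le> \<beta>" "\<beta> \<notin> nbhd A \<epsilon>" "{a..<\<beta>} \<subseteq> nbhd A \<epsilon>"
      and P: "{\<beta> - \<epsilon><..<\<beta>} \<subseteq> nbhd A \<epsilon> - A"
      by (rule nbhd_gap_left[OF e(3) a(1)])
    moreover have "z1 \<le> \<beta>" using calculation(2) a(2) z(1) by (auto simp: abs_if split: if_splits)
    ultimately have "c * t \<le> measure M {\<beta> - \<epsilon><..<\<beta>}"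
      using mass_left[of \<beta>] trunc_between[of \<beta>] e(2) by simp
    also have "\<dots> \<le> measure M (nbhd A \<epsilon> - A)" by (rule measure_le_nbhd_diff[OF P])
    finally show ?thesis .
  qed
qed

lemma left_part_gap_mass:
  assumes z1: "z1 \<notin> nbhd A \<epsilon>"
  obtains P where "P \<in> sets borel" "P \<subseteq> nbhd A \<epsilon> - A" "P \<subseteq> {..<z1}"
    "c * measure M (A \<inter> {..z1}) \<le> measure M P"
proof (cases "A \<inter> {..z1} = {}")
  case True
  then show ?thesis using that[of "{}"] by simp
next
  case False
  have "bdd_above (A \<inter> {..z1})" by (rule bdd_aboveI[of _ z1]) auto
  then obtain a where a: "a \<in> A \<inter> {..z1}" "Sup (A \<inter> {..z1}) < a + \<epsilon>"
    using less_cSup_iff[OF False, of "Sup (A \<inter> {..z1}) - \<epsilon>"] eps_pos by auto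
  obtain \<beta> where "\<beta> \<le> z1" "a + \<epsilon> \<le> \<beta>" "\<beta> \<notin> nbhd A \<epsilon>" "{a..<\<beta>} \<subseteq> nbhd A \<epsilon>"
    and P: "{\<beta> - \<epsilon><..<\<beta>} \<subseteq> nbhd A \<epsilon> - A"
    by (rule nbhd_gap_left[OF z1]) (use a in auto)
  have "A \<inter> {..z1} \<subseteq> {..\<beta>}"
    using cSup_upper[OF _ \<open>bdd_above (A \<inter> {..z1})\<close>] a(2) \<open>a + \<epsilon> \<le> \<beta>\<close> by fastforce
  then have "c * measure M (A \<inter> {..z1}) \<le> c * measure M {..\<beta>}"
    using A c_nonneg by (intro mult_left_mono finite_measure_mono) auto
  also have "\<dots> \<le> measure M {\<beta> - \<epsilon><..<\<beta>}"
    using mass_left[of \<beta>] trunc_below[OF \<open>\<beta> \<le> z1\<close>] by simp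
  finally have "c * measure M (A \<inter> {..z1}) \<le> measure M {\<beta> - \<epsilon><..<\<beta>}" .
  moreover have "{\<beta> - \<epsilon><..<\<beta>} \<subseteq> {..<z1}" using \<open>\<beta> \<le> z1\<close> by auto
  ultimately show ?thesis by (intro that[OF _ P]) auto
qed

lemma right_part_gap_mass:
  assumes z2: "z2 \<notin> nbhd A \<epsilon>"
  obtains P where "P \<in> sets borel" "P \<subseteq> nbhd A \<epsilon> - A" "P \<subseteq> {z2<..}"
    "c * measure M (A \<inter> {z2..}) \<le> measure M P"
proof (cases "A \<inter> {z2..} = {}")
  case True
  then show ?thesis using that[of "{}"] by simp
next
  case False
  have "bdd_below (A \<inter> {z2..})" by (rule bdd_belowI[of _ z2]) auto
  then obtain a where a: "a \<in> A \<inter> {z2..}" "a < Inf (A \<inter> {z2..}) + \<epsilon>"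
    using cInf_less_iff[OF False, of "Inf (A \<inter> {z2..}) + \<epsilon>"] eps_pos by auto
  obtain \<alpha> where "z2 \<le> \<alpha>" "\<alpha> + \<epsilon> \<le> a" "\<alpha> \<notin> nbhd A \<epsilon>" "{\<alpha><..a} \<subseteq> nbhd A \<epsilon>"
    and P: "{\<alpha><..<\<alpha> + \<epsilon>} \<subseteq> nbhd A \<epsilon> - A"
    by (rule nbhd_gap_right[OF z2]) (use a in auto)
  have "A \<inter> {z2..} \<subseteq> {\<alpha>..}"
    using cInf_lower[OF _ \<open>bdd_below (A \<inter> {z2..})\<close>] a(2) \<open>\<alpha> + \<epsilon> \<le> a\<close> by fastforce
  then have "c * measure M (A \<inter> {z2..}) \<le> c * measure M {\<alpha>..}"
    using A c_nonneg by (intro mult_left_mono finite_measure_mono) auto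
  also have "\<dots> \<le> measure M {\<alpha><..<\<alpha> + \<epsilon>}"
    using mass_right[of \<alpha>] trunc_above[OF \<open>z2 \<le> \<alpha>\<close>] by simp
  finally have "c * measure M (A \<inter> {z2..}) \<le> measure M {\<alpha><..<\<alpha> + \<epsilon>}" .
  moreover have "{\<alpha><..<\<alpha> + \<epsilon>} \<subseteq> {z2<..}" using \<open>z2 \<le> \<alpha>\<close> by auto
  ultimately show ?thesis by (intro that[OF _ P]) auto
qed

lemma nbhd_diff_ge_outside:
  assumes outside: "\<And>z. z1 \<le> z \<Longrightarrow> z \<le> z2 \<Longrightarrow> z \<notin> nbhd A \<epsilon>"
  shows "c * measure M A \<le> measure M (nbhd A \<epsilon> - A)"
proof -
  obtain PL where PL: "PL \<in> sets borel" "PL \<subseteq> nbhd A \<epsilon> - A" "PL \<subseteq> {..<z1}"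
      "c * measure M (A \<inter> {..z1}) \<le> measure M PL"
    by (rule left_part_gap_mass) (use outside quantiles(1) in auto)
  obtain PR where PR: "PR \<in> sets borel" "PR \<subseteq> nbhd A \<epsilon> - A" "PR \<subseteq> {z2<..}"
      "c * measure M (A \<inter> {z2..}) \<le> measure M PR"
    by (rule right_part_gap_mass) (use outside quantiles(1) in auto)
  have "A \<subseteq> (A \<inter> {..z1}) \<union> (A \<inter> {z2..})"
  proof (rule subsetI, rule ccontr)
    fix x assume x: "x \<in> A" "x \<notin> (A \<inter> {..z1}) \<union> (A \<inter> {z2..})"
    then have "z1 \<le> x" "x \<le> z2" by auto
    with x(1) outside subset_nbhd[OF eps_pos, of A] show False by blast
  qed
  then have "measure M A \<le> measure M ((A \<inter> {..z1}) \<union> (A \<inter> {z2..}))"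
    using A by (intro finite_measure_mono) auto
  also have "\<dots> \<le> measure M (A \<inter> {..z1}) + measure M (A \<inter> {z2..})"
    using A by (intro measure_Un_le) auto
  finally have "c * measure M A \<le> c * measure M (A \<inter> {..z1}) + c * measure M (A \<inter> {z2..})"
    using c_nonneg by (simp add: mult_left_mono flip: distrib_left)
  also have "\<dots> \<le> measure M PL + measure M PR" using PL(4) PR(4) by simp
  also have "\<dots> = measure M (PL \<union> PR)"
  proof -
    have "PL \<inter> PR = {}"
    proof (rule equals0I)
      fix x assume "x \<in> PL \<inter> PR"
      then have "x < z1" "z2 < x" using PL(3) PR(3) by auto
      then show False using quantiles(1) by linarith
    qed
    then show ?thesis using PL(1) PR(1) by (intro finite_measure_Union[symmetric]) auto
  qed
  also have "\<dots> \<le> measure M (nbhd A \<epsilon> - A)"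
    using PL(2) PR(2) by (intro measure_le_nbhd_diff) auto
  finally show ?thesis .
qed

lemma complement_gap_mass_left:
  assumes a: "a \<in> A" and inside: "{z1..a} \<subseteq> nbhd A \<epsilon>"
  obtains P Q where "P \<in> sets borel" "Q \<in> sets borel" "P \<subseteq> nbhd A \<epsilon> - A" "P \<subseteq> {..<a}"
    "- A \<inter> {..a} \<subseteq> Q \<union> (nbhd A \<epsilon> - A)" "c * measure M Q \<le> measure M P"
proof (cases "{..a} \<subseteq> nbhd A \<epsilon>")
  case True
  then show ?thesis using that[of "{}" "{}"] by auto
next
  case False
  then obtain e where e: "e \<notin> nbhd A \<epsilon>" "e \<le> a" by auto
  obtain \<alpha> where "e \<le> \<alpha>" "\<alpha> + \<epsilon> \<le> a" "\<alpha> \<notin> nbhd A \<epsilon>" and gap: "{\<alpha><..a} \<subseteq> nbhd A \<epsilon>"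
    and P: "{\<alpha><..<\<alpha> + \<epsilon>} \<subseteq> nbhd A \<epsilon> - A"
    by (rule nbhd_gap_right[OF e(1) a e(2)])
  have "\<alpha> \<le> z1"
  proof (rule ccontr)
    assume "\<not> \<alpha> \<le> z1"
    then have "\<alpha> \<in> {z1..a}" using \<open>\<alpha> + \<epsilon> \<le> a\<close> eps_pos by auto
    with inside \<open>\<alpha> \<notin> nbhd A \<epsilon>\<close> show False by blast
  qed
  then have "c * measure M {..\<alpha>} \<le> measure M {\<alpha><..<\<alpha> + \<epsilon>}"
    using mass_right[of \<alpha>] trunc_below by simp
  moreover have "- A \<inter> {..a} \<subseteq> {..\<alpha>} \<union> (nbhd A \<epsilon> - A)" using gap by (auto simp: not_le)
  moreover have "{\<alpha><..<\<alpha> + \<epsilon>} \<subseteq> {..<a}" using \<open>\<alpha> + \<epsilon> \<le> a\<close> by auto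
  ultimately show ?thesis by (intro that[OF _ _ P]) auto
qed

lemma complement_gap_mass_right:
  assumes a: "a \<in> A" and inside: "{a..z2} \<subseteq> nbhd A \<epsilon>"
  obtains P Q where "P \<in> sets borel" "Q \<in> sets borel" "P \<subseteq> nbhd A \<epsilon> - A" "P \<subseteq> {a<..}"
    "- A \<inter> {a..} \<subseteq> Q \<union> (nbhd A \<epsilon> - A)" "c * measure M Q \<le> measure M P"
proof (cases "{a..} \<subseteq> nbhd A \<epsilon>")
  case True
  then show ?thesis using that[of "{}" "{}"] by auto
next
  case False
  then obtain e where e: "e \<notin> nbhd A \<epsilon>" "a \<le> e" by auto
  obtain \<beta> where "\<beta> \<le> e" "a + \<epsilon> \<le> \<beta>" "\<beta> \<notin> nbhd A \<epsilon>" and gap: "{a..<\<beta>} \<subseteq> nbhd A \<epsilon>"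
    and P: "{\<beta> - \<epsilon><..<\<beta>} \<subseteq> nbhd A \<epsilon> - A"
    by (rule nbhd_gap_left[OF e(1) a e(2)])
  have "z2 \<le> \<beta>"
  proof (rule ccontr)
    assume "\<not> z2 \<le> \<beta>"
    then have "\<beta> \<in> {a..z2}" using \<open>a + \<epsilon> \<le> \<beta>\<close> eps_pos by auto
    with inside \<open>\<beta> \<notin> nbhd A \<epsilon>\<close> show False by blast
  qed
  then have "c * measure M {\<beta>..} \<le> measure M {\<beta> - \<epsilon><..<\<beta>}"
    using mass_left[of \<beta>] trunc_above by simp
  moreover have "- A \<inter> {a..} \<subseteq> {\<beta>..} \<union> (nbhd A \<epsilon> - A)" using gap by (auto simp: not_le)
  moreover have "{\<beta> - \<epsilon><..<\<beta>} \<subseteq> {a<..}" using \<open>a + \<epsilon> \<le> \<beta>\<close> by auto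
  ultimately show ?thesis by (intro that[OF _ _ P]) auto
qed

lemma nbhd_diff_ge_inside:
  assumes inside: "\<And>z. z1 \<le> z \<Longrightarrow> z \<le> z2 \<Longrightarrow> z \<in> nbhd A \<epsilon>"
  shows "c * (1 - measure M A) \<le> (1 + c) * measure M (nbhd A \<epsilon> - A)"
proof -
  have "z1 \<in> nbhd A \<epsilon>" using inside quantiles(1) by blast
  then obtain a where a: "a \<in> A" "\<bar>z1 - a\<bar> < \<epsilon>" unfolding nbhd_def by blast
  have near_a: "y \<in> nbhd A \<epsilon>" if "min z1 a \<le> y" "y \<le> max z1 a" for y
    using in_nbhdI[OF a(1), of y] a(2) that by (auto simp: abs_if split: if_splits)
  obtain PL QL where L: "PL \<in> sets borel" "QL \<in> sets borel" "PL \<subseteq> nbhd A \<epsilon> - A" "PL \<subseteq> {..<a}"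
      "- A \<inter> {..a} \<subseteq> QL \<union> (nbhd A \<epsilon> - A)" "c * measure M QL \<le> measure M PL"
    by (rule complement_gap_mass_left[OF a(1)]) (use near_a in auto)
  have "{a..z2} \<subseteq> nbhd A \<epsilon>"
  proof
    fix x assume "x \<in> {a..z2}"
    then show "x \<in> nbhd A \<epsilon>" using near_a[of x] inside[of x] by (cases "x \<le> z1") auto
  qed
  obtain PR QR where R: "PR \<in> sets borel" "QR \<in> sets borel" "PR \<subseteq> nbhd A \<epsilon> - A" "PR \<subseteq> {a<..}"
      "- A \<inter> {a..} \<subseteq> QR \<union> (nbhd A \<epsilon> - A)" "c * measure M QR \<le> measure M PR"
    by (rule complement_gap_mass_right[OF a(1) \<open>{a..z2} \<subseteq> nbhd A \<epsilon>\<close>])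
  define X where "X = measure M (nbhd A \<epsilon> - A)"
  have "PL \<inter> PR = {}"
  proof (rule equals0I)
    fix x assume "x \<in> PL \<inter> PR"
    then have "x < a" "a < x" using L(4) R(4) by auto
    then show False by simp
  qed
  then have "measure M PL + measure M PR \<le> X"
    using L(1,3) R(1,3) measure_le_nbhd_diff[of "PL \<union> PR"] unfolding X_def
    by (simp add: finite_measure_Union)
  then have cX: "c * (measure M QL + measure M QR) \<le> X" using L(6) R(6) by (simp add: distrib_left)
  have "- A \<subseteq> QL \<union> QR \<union> (nbhd A \<epsilon> - A)" using L(5) R(5) by fastforce
  then have "measure M (- A) \<le> measure M (QL \<union> QR \<union> (nbhd A \<epsilon> - A))"
    using A L(2) R(2) by (intro finite_measure_mono) auto
  also have "\<dots> \<le> measure M QL + measure M QR + X"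
    unfolding X_def using A L(2) R(2) by (intro measure_Un_le[THEN order_trans] add_right_mono measure_Un_le) auto
  finally have "1 - measure M A \<le> measure M QL + measure M QR + X"
    using prob_compl[of A] A by (simp add: Compl_eq_Diff_UNIV)
  then have "c * (1 - measure M A) \<le> c * (measure M QL + measure M QR) + c * X"
    using c_nonneg by (simp add: mult_left_mono flip: distrib_left)
  with cX show ?thesis unfolding X_def by (simp add: algebra_simps)
qed

text \<open>Split according to how the open set A_\<epsilon> meets [z1, z2]. If it meets it and misses it, a
  gap of A_\<epsilon> in [z1, z2] is bordered by an \<epsilon>-interval of A_\<epsilon> - A of mass at least c t. If it
  misses it, the \<epsilon>-intervals after the last point of A below z1 and before the first one above z2
  carry c \<sigma>(A). If it covers it, the same argument applied to the gaps of A_\<epsilon> around a point of A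
  near z1 bounds c (1 - \<sigma>(A)) by (1 + c) \<sigma>(A_\<epsilon> - A).\<close>
lemma measure_nbhd_diff_ge:
  assumes "t \<le> measure M A" "t \<le> 1 - measure M A"
  shows "c * t / (1 + c) \<le> measure M (nbhd A \<epsilon> - A)"
proof -
  define X where "X = measure M (nbhd A \<epsilon> - A)"
  have X_le: "X \<le> (1 + c) * X" unfolding X_def using c_nonneg by (simp add: distrib_right)
  consider (crossing) e z where "z1 \<le> e" "e \<le> z2" "e \<notin> nbhd A \<epsilon>" "z1 \<le> z" "z \<le> z2" "z \<in> nbhd A \<epsilon>"
    | (outside) "\<And>z. z1 \<le> z \<Longrightarrow> z \<le> z2 \<Longrightarrow> z \<notin> nbhd A \<epsilon>"
    | (inside) "\<And>z. z1 \<le> z \<Longrightarrow> z \<le> z2 \<Longrightarrow> z \<in> nbhd A \<epsilon>"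
    by blast
  then have "c * t \<le> (1 + c) * X"
  proof cases
    case crossing
    then have "c * t \<le> X" unfolding X_def by (rule nbhd_diff_ge_crossing)
    with X_le show ?thesis by linarith
  next
    case outside
    then have "c * measure M A \<le> X" unfolding X_def by (rule nbhd_diff_ge_outside)
    moreover have "c * t \<le> c * measure M A" using assms c_nonneg by (simp add: mult_left_mono)
    ultimately show ?thesis using X_le by linarith
  next
    case inside
    then have "c * (1 - measure M A) \<le> (1 + c) * X" unfolding X_def by (rule nbhd_diff_ge_inside)
    moreover have "c * t \<le> c * (1 - measure M A)" using assms c_nonneg by (simp add: mult_left_mono)
    ultimately show ?thesis by linarith
  qed
  then show ?thesis unfolding X_def using c_nonneg by (simp add: divide_le_eq mult.commute add_pos_nonneg)
qed

end

end

section \<open>Densities with a uniformly convex potential\<close>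

lemma phi_mono: "a \<le> b \<Longrightarrow> phi \<delta> a \<le> phi \<delta> b"
  unfolding phi_def
  by (intro nn_integral_mono) (auto simp: indicator_def phi_integrand_def intro!: ennreal_leI mult_right_mono)

lemma phi_neg_le_inverse:
  assumes nonneg: "\<forall>x\<ge>0. \<delta> x \<ge> 0" and v: "v > 0"
  shows "phi \<delta> (- v) \<le> ennreal (1 / v)"
proof -
  have "phi \<delta> (- v) \<le> (\<integral>\<^sup>+x. ennreal (exp (- v * x)) * indicator {0..} x \<partial>lborel)"
    unfolding phi_def
  proof (intro nn_integral_mono)
    fix x :: real
    have "0 \<le> x \<Longrightarrow> \<delta> x \<noteq> \<infinity> \<Longrightarrow> real_of_ereal (\<delta> x) \<ge> 0"
      using nonneg by (simp add: real_of_ereal_pos)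
    then show "phi_integrand \<delta> (- v) x * indicator {0..} x \<le> ennreal (exp (- v * x)) * indicator {0..} x"
      by (auto simp: phi_integrand_def indicator_def intro!: ennreal_leI)
  qed
  also have "\<dots> = ennreal (1 / v)"
    using nn_integral_has_integral_lebesgue'[OF _ has_integral_exp_minus_to_infinity[OF v, of 0]] by simp
  finally show ?thesis .
qed

lemma tail_rate_le:
  fixes P :: "real \<Rightarrow> real"
  assumes P_neg: "P (- w) \<le> 1 / w" and uw: "0 < u" "u < w" and X: "0 \<le> X" "X \<le> f * P (- w)"
    and f: "0 \<le> f"
  shows "u * X \<le> f"
proof -
  have "X \<le> f * (1 / w)" using X(2) mult_left_mono[OF P_neg f] by linarith
  then have "w * X \<le> f" using uw by (simp add: field_simps)
  moreover have "u * X \<le> w * X" using uw X(1) by (intro mult_right_mono) auto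
  ultimately show ?thesis by linarith
qed

text \<open>Used with F the cdf and f the density at a point where the potential has supporting slope v,
  and P = Phi. If |v| \<le> u both tails are controlled by P u; otherwise the tail on the side of
  the slope decays at rate |v| > u.\<close>
lemma min_tails_le_of_support_slope:
  fixes P :: "real \<Rightarrow> real"
  assumes mono: "mono P" and P_neg: "\<And>w. 0 < w \<Longrightarrow> P (- w) \<le> 1 / w"
    and left: "F \<le> f * P v" and right: "1 - F \<le> f * P (- v)"
    and u: "0 < u" and ut: "2 * t * (u * P u) \<le> 1" and f: "0 \<le> f" and F: "0 \<le> F" "F \<le> 1"
  shows "u * min F (min t (1 - F)) \<le> f"
proof -
  consider "\<bar>v\<bar> \<le> u" | "u < v" | "u < - v" by linarith
  then show ?thesis
  proof cases
    case 1
    then have "f * P v \<le> f * P u" "f * P (- v) \<le> f * P u"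
      using mono f by (auto simp: mono_def intro!: mult_left_mono)
    then have one: "1 \<le> f * (2 * P u)" using left right by linarith
    then have "0 < 2 * P u" using f by (metis mult_nonneg_nonpos not_le not_one_le_zero order_trans)
    moreover have "u * t * (2 * P u) \<le> f * (2 * P u)"
      using ut one by (simp add: algebra_simps)
    ultimately have "u * t \<le> f" by simp
    moreover have "u * min F (min t (1 - F)) \<le> u * t" using u by (simp add: mult_left_mono)
    ultimately show ?thesis by linarith
  next
    case 2
    then have "0 < v" using u by simp
    then have "u * (1 - F) \<le> f" using tail_rate_le[where P = P and w = v, OF P_neg[OF \<open>0 < v\<close>] u 2 _ right f] F by simp
    moreover have "u * min F (min t (1 - F)) \<le> u * (1 - F)" using u by (intro mult_left_mono) auto
    ultimately show ?thesis by linarith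
  next
    case 3
    then have "0 < - v" using u by simp
    moreover have "F \<le> f * P (- (- v))" using left by simp
    ultimately have "u * F \<le> f" using tail_rate_le[where P = P and w = "- v", OF P_neg[OF \<open>0 < - v\<close>] u 3 F(1) _ f] by simp
    moreover have "u * min F (min t (1 - F)) \<le> u * F" using u by (intro mult_left_mono) auto
    ultimately show ?thesis by linarith
  qed
qed

locale uniformly_convex_potential =
  fixes \<delta> g :: "real \<Rightarrow> ereal"
  assumes delta_meas: "\<delta> \<in> borel_measurable (restrict_space borel {0..})"
    and delta_nonneg: "\<forall>x\<ge>0. \<delta> x \<ge> 0"
    and phi_finite: "\<forall>t. phi \<delta> t < \<infinity>"
    and g_meas[measurable]: "g \<in> borel_measurable borel"
    and g_not_minf: "\<forall>x. g x \<noteq> -\<infinity>"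
    and prob: "prob_space (sigma_g g)"
    and convex: "\<forall>x y. g x \<noteq> \<infinity> \<and> g y \<noteq> \<infinity> \<longrightarrow>
                   (g x + g y) / 2 - g ((x + y) / 2) \<ge> \<delta> \<bar>x - y\<bar>"
begin

sublocale midpoint_convex g
proof
  show "g x \<noteq> -\<infinity>" for x using g_not_minf by blast
  show "g ((x + y) / 2) \<le> (g x + g y) / 2" if fin: "g x \<noteq> \<infinity>" "g y \<noteq> \<infinity>" for x y
  proof -
    obtain X Y where XY: "g x = ereal X" "g y = ereal Y" using fin g_not_minf by (metis ereal_cases)
    have "\<delta> \<bar>x - y\<bar> \<ge> 0" using delta_nonneg by simp
    then have "0 \<le> (g x + g y) / 2 - g ((x + y) / 2)" using convex fin by (metis order_trans)
    then have "0 \<le> ereal ((X + Y) / 2) - g ((x + y) / 2)" using XY by simp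
    then show ?thesis using XY by (cases "g ((x + y) / 2)") auto
  qed
qed

lemma sets_sigma_g[simp]: "sets (sigma_g g) = sets borel"
  unfolding sigma_g_def by simp

lemma dens_measurable[measurable]: "dens g \<in> borel_measurable borel"
  unfolding dens_def by measurable

lemma emeasure_sigma_g: "S \<in> sets borel \<Longrightarrow> emeasure (sigma_g g) S = (\<integral>\<^sup>+x\<in>S. dens g x \<partial>lborel)"
  unfolding sigma_g_def by (simp add: emeasure_density)

sublocale sigma: real_distribution "sigma_g g"
  using prob by (simp add: real_distribution_def real_distribution_axioms_def)

lemma emeasure_sigma_g_eq_0:
  assumes "S \<in> sets borel" "S \<subseteq> {x. g x = \<infinity>}"
  shows "emeasure (sigma_g g) S = 0"
proof -
  have "(\<lambda>x. dens g x * indicator S x) = (\<lambda>_. 0)"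
    using assms(2) by (intro ext) (auto simp: dens_def split: split_indicator)
  then show ?thesis using assms(1) by (simp add: emeasure_sigma_g)
qed

lemma measure_sigma_g_singleton: "measure (sigma_g g) {x} = 0"
proof -
  have "emeasure (sigma_g g) {x} = 0"
    by (subst emeasure_sigma_g) (auto intro!: nn_integral_null_set finite_imp_null_set_lborel)
  then show ?thesis by (simp add: measure_def)
qed

lemma dom_not_null: "emeasure lborel {x. g x \<noteq> \<infinity>} \<noteq> 0"
proof
  assume "emeasure lborel {x. g x \<noteq> \<infinity>} = 0"
  then have "(\<integral>\<^sup>+x\<in>{x. g x \<noteq> \<infinity>}. dens g x \<partial>lborel) = 0"
    by (intro nn_integral_null_set null_setsI) auto
  moreover have "(\<lambda>x. dens g x * indicator {x. g x \<noteq> \<infinity>} x) = dens g"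
    by (intro ext) (auto simp: dens_def split: split_indicator)
  ultimately have "emeasure (sigma_g g) UNIV = 0" by (simp add: emeasure_sigma_g)
  then show False using sigma.emeasure_space_1 by simp
qed

sublocale midpoint_convex_bounded g
  by unfold_locales (rule bounded_above_near_exists[OF g_meas dom_not_null])

definition dom_boundary :: "real set" where
  "dom_boundary = {x. g x \<noteq> \<infinity> \<and> x \<notin> dom_interior}"

text \<open>A point of the domain outside its interior is its least or its greatest element.\<close>
lemma finite_dom_boundary: "finite dom_boundary"
proof -
  have "dom_boundary \<subseteq> {x. g x \<noteq> \<infinity> \<and> (\<forall>a<x. g a = \<infinity>)} \<union> {x. g x \<noteq> \<infinity> \<and> (\<forall>b>x. g b = \<infinity>)}"
    unfolding dom_boundary_def dom_interior_def by auto
  moreover have "{x. g x \<noteq> \<infinity> \<and> (\<forall>a<x. g a = \<infinity>)} \<subseteq> {Inf {x. g x \<noteq> \<infinity>}}"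
    by (auto intro!: cInf_eq_minimum[symmetric] simp: not_less)
  moreover have "{x. g x \<noteq> \<infinity> \<and> (\<forall>b>x. g b = \<infinity>)} \<subseteq> {Sup {x. g x \<noteq> \<infinity>}}"
    by (auto intro!: cSup_eq_maximum[symmetric] simp: not_less)
  ultimately show ?thesis by (meson finite.intros finite_Un finite_subset)
qed

lemma supporting_line_gap:
  assumes y: "y \<in> dom_interior" and z: "z \<in> dom_interior"
    and v: "\<And>z. z \<in> dom_interior \<Longrightarrow> real_g y + v * (z - y) \<le> real_g z"
  obtains e where "\<delta> \<bar>z - y\<bar> = ereal e" "real_g y + v * (z - y) + 2 * e \<le> real_g z"
proof -
  define m where "m = (y + z) / 2"
  have m: "m \<in> dom_interior"
    using dom_interior_between[OF y z] dom_interior_between[OF z y] unfolding m_def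
    by (cases "y \<le> z") auto
  have fin: "g y = ereal (real_g y)" "g z = ereal (real_g z)" "g m = ereal (real_g m)"
    using ereal_real_g finite_dom_interior y z m by blast+
  have "\<delta> \<bar>z - y\<bar> \<le> (g y + g z) / 2 - g m"
    using convex[rule_format, of y z] fin unfolding m_def by (simp add: abs_minus_commute)
  also have "\<dots> = ereal ((real_g y + real_g z) / 2 - real_g m)"
    unfolding fin by simp
  finally have "\<delta> \<bar>z - y\<bar> \<le> ereal ((real_g y + real_g z) / 2 - real_g m)" .
  moreover have "\<delta> \<bar>z - y\<bar> \<ge> 0" using delta_nonneg by simp
  ultimately obtain e where e: "\<delta> \<bar>z - y\<bar> = ereal e" "e \<le> (real_g y + real_g z) / 2 - real_g m"
    by (cases "\<delta> \<bar>z - y\<bar>") auto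
  have "real_g y + v * (z - y) / 2 \<le> real_g m"
    using v[OF m] unfolding m_def by (simp add: algebra_simps)
  with e(2) have "real_g y + v * (z - y) + 2 * e \<le> real_g z" by argo
  with e(1) show ?thesis by (rule that)
qed

lemma dens_le_shift:
  assumes y: "y \<in> dom_interior"
    and v: "\<And>z. z \<in> dom_interior \<Longrightarrow> real_g y + v * (z - y) \<le> real_g z"
    and d: "\<bar>d\<bar> = 1" and s: "0 \<le> s" and not_boundary: "y + d * s \<notin> dom_boundary"
  shows "dens g (y + d * s) \<le> dens g y * phi_integrand \<delta> (- d * v) s"
proof (cases "g (y + d * s) = \<infinity>")
  case False
  then have z: "y + d * s \<in> dom_interior" using not_boundary unfolding dom_boundary_def by auto
  obtain e where "\<delta> \<bar>y + d * s - y\<bar> = ereal e"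
    and e_le: "real_g y + v * (y + d * s - y) + 2 * e \<le> real_g (y + d * s)"
    by (rule supporting_line_gap[OF y z v])
  moreover have "\<bar>y + d * s - y\<bar> = s" using d s by (simp add: abs_mult)
  ultimately have e: "\<delta> s = ereal e" "real_g y + v * (d * s) + 2 * e \<le> real_g (y + d * s)"
    by simp_all
  have "dens g (y + d * s) = ennreal (exp (- real_g (y + d * s)))"
    using False by (simp add: dens_def real_g_def)
  also have "\<dots> \<le> ennreal (exp (- real_g y + (- d * v * s - 2 * e)))"
    using e(2) by (intro ennreal_leI) (simp add: algebra_simps)
  also have "\<dots> = ennreal (exp (- real_g y)) * ennreal (exp (- d * v * s - 2 * e))"
    by (simp add: ennreal_mult[symmetric] exp_add[symmetric])
  also have "\<dots> = dens g y * phi_integrand \<delta> (- d * v) s"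
    using e(1) finite_dom_interior[OF y] by (simp add: dens_def phi_integrand_def real_g_def)
  finally show ?thesis .
qed (simp add: dens_def)

text \<open>\<delta> is only measurable on [0, \<infinity>); this extension makes the integrand of phi Borel on the line.\<close>
definition delta_ext :: "real \<Rightarrow> ereal" where
  "delta_ext s = \<delta> (max 0 s)"

lemma delta_ext_measurable[measurable]: "delta_ext \<in> borel_measurable borel"
proof -
  have "(\<lambda>s::real. max 0 s) \<in> borel \<rightarrow>\<^sub>M restrict_space borel {0..}"
    by (rule measurable_restrict_space2) auto
  then show ?thesis unfolding delta_ext_def using delta_meas by (rule measurable_compose)
qed

lemma phi_integrand_delta_ext_measurable[measurable]:
  "phi_integrand delta_ext t \<in> borel_measurable borel"
  unfolding phi_integrand_def by measurable

lemma phi_eq_delta_ext: "phi \<delta> t = (\<integral>\<^sup>+s. phi_integrand delta_ext t s * indicator {0..} s \<partial>lborel)"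
  unfolding phi_def by (intro nn_integral_cong) (auto simp: phi_integrand_def delta_ext_def split: split_indicator)

text \<open>The substitution x = y + d s reduces this to dens_le_shift, which fails only on the finite set
  dom_boundary.\<close>
lemma emeasure_half_line_le:
  assumes y: "y \<in> dom_interior"
    and v: "\<And>z. z \<in> dom_interior \<Longrightarrow> real_g y + v * (z - y) \<le> real_g z"
    and d: "\<bar>d\<bar> = 1"
  shows "emeasure (sigma_g g) {x. 0 \<le> d * (x - y)} \<le> dens g y * phi \<delta> (- d * v)"
proof -
  have [measurable]: "{x. 0 \<le> d * (x - y)} \<in> sets borel" by measurable
  have "d \<noteq> 0" "d * d = 1" using d by (auto simp: abs_if split: if_splits)
  have "emeasure (sigma_g g) {x. 0 \<le> d * (x - y)} = (\<integral>\<^sup>+x. dens g x * indicator {x. 0 \<le> d * (x - y)} x \<partial>lborel)"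
    by (simp add: emeasure_sigma_g)
  also have "\<dots> = (\<integral>\<^sup>+s. dens g (y + d * s) * indicator {0..} s \<partial>lborel)"
    using nn_integral_real_affine[of "\<lambda>x. dens g x * indicator {x. 0 \<le> d * (x - y)} x" d y] \<open>d \<noteq> 0\<close> d
    by (simp add: mult.assoc[symmetric] \<open>d * d = 1\<close> indicator_def)
  also have "\<dots> \<le> (\<integral>\<^sup>+s. dens g y * (phi_integrand delta_ext (- d * v) s * indicator {0..} s) \<partial>lborel)"
  proof (rule nn_integral_mono_AE)
    have "(\<lambda>x. d * (x - y)) ` dom_boundary \<in> null_sets lborel"
      using finite_dom_boundary by (intro finite_imp_null_set_lborel) auto
    then have "AE s in lborel. s \<notin> (\<lambda>x. d * (x - y)) ` dom_boundary" by (rule AE_not_in)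
    then show "AE s in lborel. dens g (y + d * s) * indicator {0..} s
        \<le> dens g y * (phi_integrand delta_ext (- d * v) s * indicator {0..} s)"
    proof eventually_elim
      case (elim s)
      have "y + d * s \<notin> dom_boundary"
      proof
        assume "y + d * s \<in> dom_boundary"
        then have "d * (y + d * s - y) \<in> (\<lambda>x. d * (x - y)) ` dom_boundary" by (rule imageI)
        with elim \<open>d * d = 1\<close> show False by (simp add: mult.assoc[symmetric])
      qed
      then show ?case
        using dens_le_shift[OF y v d, of s]
        by (auto simp: phi_integrand_def delta_ext_def split: split_indicator)
    qed
  qed
  also have "\<dots> = dens g y * phi \<delta> (- d * v)"
    by (simp add: nn_integral_cmult phi_eq_delta_ext)
  finally show ?thesis .
qed

lemma cdf_eq_0_or_1:
  assumes "y \<notin> dom_interior"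
  shows "cdf (sigma_g g) y = 0 \<or> cdf (sigma_g g) y = 1"
proof -
  have "(\<forall>a<y. g a = \<infinity>) \<or> (\<forall>b>y. g b = \<infinity>)"
    using assms unfolding dom_interior_def by blast
  then consider "{..<y} \<subseteq> {x. g x = \<infinity>}" | "{y<..} \<subseteq> {x. g x = \<infinity>}" by auto
  then show ?thesis
  proof cases
    case 1
    then have "measure (sigma_g g) {..<y} = 0" using emeasure_sigma_g_eq_0 by (simp add: measure_def)
    then show ?thesis using sigma.measure_lessThan_eq_cdf[OF measure_sigma_g_singleton] by simp
  next
    case 2
    then have "measure (sigma_g g) {y<..} = 0" using emeasure_sigma_g_eq_0 by (simp add: measure_def)
    moreover have "measure (sigma_g g) {y<..} = 1 - cdf (sigma_g g) y"
      using sigma.prob_compl[of "{..y}"] unfolding cdf_def by (simp add: Compl_eq_Diff_UNIV[symmetric])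
    ultimately show ?thesis by simp
  qed
qed

definition Phi :: "real \<Rightarrow> real" where
  "Phi s = enn2real (phi \<delta> s)"

lemma phi_eq_Phi: "phi \<delta> s = ennreal (Phi s)"
  using phi_finite unfolding Phi_def by (simp add: ennreal_enn2real less_top[symmetric])

lemma Phi_nonneg: "0 \<le> Phi s"
  unfolding Phi_def by simp

lemma mono_Phi: "mono Phi"
proof (rule monoI)
  fix a b :: real
  assume "a \<le> b"
  then show "Phi a \<le> Phi b" unfolding Phi_def using phi_finite by (intro enn2real_mono phi_mono) auto
qed

lemma Phi_neg_le_inverse:
  assumes "0 < w"
  shows "Phi (- w) \<le> 1 / w"
  using phi_neg_le_inverse[OF delta_nonneg assms] assms unfolding phi_eq_Phi
  by (subst (asm) ennreal_le_iff) auto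

lemma cdf_tails_le:
  assumes y: "y \<in> dom_interior"
    and v: "\<And>z. z \<in> dom_interior \<Longrightarrow> real_g y + v * (z - y) \<le> real_g z"
  shows "cdf (sigma_g g) y \<le> exp (- real_g y) * Phi v"
    and "1 - cdf (sigma_g g) y \<le> exp (- real_g y) * Phi (- v)"
proof -
  have dens_y: "dens g y * phi \<delta> s = ennreal (exp (- real_g y) * Phi s)" for s
    using finite_dom_interior[OF y] Phi_nonneg
    by (simp add: dens_def real_g_def phi_eq_Phi ennreal_mult)
  have "ennreal (cdf (sigma_g g) y) = emeasure (sigma_g g) {x. 0 \<le> - 1 * (x - y)}"
    unfolding cdf_def by (simp add: sigma.emeasure_eq_measure atMost_def)
  also have "\<dots> \<le> ennreal (exp (- real_g y) * Phi v)"
    using emeasure_half_line_le[OF y v, of "- 1"] by (simp add: dens_y)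
  finally show "cdf (sigma_g g) y \<le> exp (- real_g y) * Phi v"
    using Phi_nonneg by (simp add: ennreal_le_iff)
  have "ennreal (1 - cdf (sigma_g g) y) = emeasure (sigma_g g) {x. 0 \<le> 1 * (x - y)}"
    using sigma.measure_atLeast_eq[OF measure_sigma_g_singleton, of y]
    by (simp add: sigma.emeasure_eq_measure atLeast_def)
  also have "\<dots> \<le> ennreal (exp (- real_g y) * Phi (- v))"
    using emeasure_half_line_le[OF y v, of 1] by (simp add: dens_y)
  finally show "1 - cdf (sigma_g g) y \<le> exp (- real_g y) * Phi (- v)"
    using Phi_nonneg by (simp add: ennreal_le_iff)
qed

lemma density_profile:
  assumes u: "0 < u" and ut: "2 * t * psi \<delta> u \<le> 1"
  shows "ennreal (u * min (cdf (sigma_g g) y) (min t (1 - cdf (sigma_g g) y))) \<le> dens g y"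
proof (cases "y \<in> dom_interior")
  case True
  obtain v where v: "\<And>z. z \<in> dom_interior \<Longrightarrow> real_g y + v * (z - y) \<le> real_g z"
    using supporting_line[OF True] by blast
  have "2 * t * (u * Phi u) \<le> 1" using ut unfolding psi_def Phi_def .
  then have "u * min (cdf (sigma_g g) y) (min t (1 - cdf (sigma_g g) y)) \<le> exp (- real_g y)"
    using cdf_tails_le[OF True v] sigma.cdf_nonneg sigma.cdf_bounded_prob
    by (intro min_tails_le_of_support_slope[OF mono_Phi Phi_neg_le_inverse _ _ u]) auto
  then show ?thesis
    using finite_dom_interior[OF True] by (simp add: dens_def real_g_def ennreal_leI)
next
  case False
  then have "u * min (cdf (sigma_g g) y) (min t (1 - cdf (sigma_g g) y)) \<le> 0"
    using cdf_eq_0_or_1[OF False] u by (auto simp: mult_le_0_iff)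
  then show ?thesis by (simp add: ennreal_neg)
qed

text \<open>Across the interval the cdf moves by at most the mass p of the interval, so there the
  density stays above w (m - p), m the truncated cdf at x.\<close>
lemma measure_interval_ge:
  assumes profile: "\<And>y. ennreal (w * min (cdf (sigma_g g) y) (min t (1 - cdf (sigma_g g) y))) \<le> dens g y"
    and w: "0 < w" and ab: "a < b" and x: "x \<in> {a..b}"
  shows "(b - a) * w / (1 + (b - a) * w) * min (cdf (sigma_g g) x) (min t (1 - cdf (sigma_g g) x))
    \<le> measure (sigma_g g) {a<..<b}"
proof -
  define F where "F = cdf (sigma_g g)"
  define m where "m = min (F x) (min t (1 - F x))"
  define p where "p = measure (sigma_g g) {a<..<b}"
  have "ennreal (w * (m - p)) * indicator {a<..<b} y \<le> dens g y * indicator {a<..<b} y" for y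
  proof (cases "y \<in> {a<..<b}")
    case True
    have "\<bar>F y - F x\<bar> \<le> p"
      unfolding F_def p_def using True x
      by (intro sigma.cdf_diff_le_measure_interval measure_sigma_g_singleton) auto
    then have "m - p \<le> min (F y) (min t (1 - F y))"
      using min_trunc_lipschitz[of "F x" t "F y"] unfolding m_def by linarith
    then have "ennreal (w * (m - p)) \<le> ennreal (w * min (F y) (min t (1 - F y)))"
      using w by (intro ennreal_leI mult_left_mono) auto
    also have "\<dots> \<le> dens g y" using profile unfolding F_def .
    finally show ?thesis using True by simp
  qed simp
  then have "(\<integral>\<^sup>+y. ennreal (w * (m - p)) * indicator {a<..<b} y \<partial>lborel)
      \<le> (\<integral>\<^sup>+y. dens g y * indicator {a<..<b} y \<partial>lborel)"
    by (intro nn_integral_mono)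
  then have "ennreal (w * (m - p)) * ennreal (b - a) \<le> (\<integral>\<^sup>+y. dens g y * indicator {a<..<b} y \<partial>lborel)"
    using ab by (simp add: nn_integral_cmult_indicator)
  also have "\<dots> = ennreal p"
    unfolding p_def by (simp add: emeasure_sigma_g[symmetric] sigma.emeasure_eq_measure)
  finally have mass: "ennreal (w * (m - p)) * ennreal (b - a) \<le> ennreal p" .
  have "0 \<le> p" unfolding p_def by simp
  have "w * (m - p) * (b - a) \<le> p"
  proof (cases "0 \<le> w * (m - p)")
    case True
    then show ?thesis using mass ab \<open>0 \<le> p\<close> by (simp add: ennreal_mult[symmetric])
  next
    case False
    then have "w * (m - p) * (b - a) \<le> 0" using ab by (simp add: mult_nonpos_nonneg)
    then show ?thesis using \<open>0 \<le> p\<close> by linarith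
  qed
  then have "(b - a) * w * m \<le> p * (1 + (b - a) * w)" by (simp add: algebra_simps)
  moreover have "0 < 1 + (b - a) * w" using ab w by (simp add: add_pos_pos)
  ultimately show ?thesis unfolding F_def m_def p_def by (simp add: pos_divide_le_eq mult.commute)
qed

lemma nbhd_increment_ge:
  assumes A: "A \<in> sets borel" and t: "0 \<le> t" "t \<le> measure (sigma_g g) A" "t \<le> 1 - measure (sigma_g g) A"
    and u: "0 \<le> u" and ut: "2 * t * psi \<delta> u \<le> 1" and eps: "0 < \<epsilon>"
  shows "\<epsilon> * (u * t / (1 + 2 * \<epsilon> * u)) \<le> measure (sigma_g g) (nbhd A \<epsilon>) - measure (sigma_g g) A"
proof (cases "t = 0 \<or> u = 0")
  case True
  then show ?thesis using subset_nbhd[OF eps] A by (auto simp: sigma.finite_measure_mono)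
next
  case False
  with t(1) u have t_pos: "0 < t" and u_pos: "0 < u" by auto
  define c where "c = \<epsilon> * u / (1 + \<epsilon> * u)"
  have "0 < 1 + \<epsilon> * u" "0 < 1 + 2 * \<epsilon> * u" using eps u by (simp_all add: add_pos_nonneg)
  note profile = density_profile[OF u_pos ut]
  obtain z1 z2 where z: "z1 \<le> z2" "cdf (sigma_g g) z1 = t" "cdf (sigma_g g) z2 = 1 - t"
    using sigma.exists_quantiles[OF measure_sigma_g_singleton t_pos] t by auto
  interpret truncated_interval_mass "sigma_g g" \<epsilon> c t z1 z2
  proof unfold_locales
    show "0 \<le> c" unfolding c_def using eps u by simp
    show "c * min (cdf (sigma_g g) x) (min t (1 - cdf (sigma_g g) x)) \<le> measure (sigma_g g) {x<..<x + \<epsilon>}" for x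
      using measure_interval_ge[OF profile u_pos, of x "x + \<epsilon>" x] eps unfolding c_def by simp
    show "c * min (cdf (sigma_g g) x) (min t (1 - cdf (sigma_g g) x)) \<le> measure (sigma_g g) {x - \<epsilon><..<x}" for x
      using measure_interval_ge[OF profile u_pos, of "x - \<epsilon>" x x] eps unfolding c_def by simp
  qed (use eps z measure_sigma_g_singleton in auto)
  have "c * t / (1 + c) \<le> measure (sigma_g g) (nbhd A \<epsilon> - A)"
    using measure_nbhd_diff_ge[OF A t(2,3)] .
  also have "\<dots> = measure (sigma_g g) (nbhd A \<epsilon>) - measure (sigma_g g) A"
    using subset_nbhd[OF eps] A by (intro sigma.finite_measure_Diff) auto
  finally have "c * t / (1 + c) \<le> measure (sigma_g g) (nbhd A \<epsilon>) - measure (sigma_g g) A" .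
  moreover have "c * t / (1 + c) = \<epsilon> * (u * t / (1 + 2 * \<epsilon> * u))"
  proof -
    have "1 + c = (1 + 2 * \<epsilon> * u) / (1 + \<epsilon> * u)"
      unfolding c_def using \<open>0 < 1 + \<epsilon> * u\<close> by (simp add: field_simps)
    then show ?thesis
      unfolding c_def using \<open>0 < 1 + \<epsilon> * u\<close> \<open>0 < 1 + 2 * \<epsilon> * u\<close> by simp
  qed
  ultimately show ?thesis by simp
qed

end

theorem mainTheorem18:
  fixes \<delta> :: "real \<Rightarrow> ereal" and g :: "real \<Rightarrow> ereal" and A :: "real set"
  assumes delta_meas: "\<delta> \<in> borel_measurable (restrict_space borel {0..})"
    and delta_nonneg: "\<forall>x\<ge>0. \<delta> x \<ge> 0"
    and phi_finite: "\<forall>t. phi \<delta> t < \<infinity>"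
    and g_meas: "g \<in> borel_measurable borel"
    and g_not_minf: "\<forall>x. g x \<noteq> -\<infinity>"
    and prob: "prob_space (sigma_g g)"
    and convex: "\<forall>x y. g x \<noteq> \<infinity> \<and> g y \<noteq> \<infinity> \<longrightarrow>
                   (g x + g y) / 2 - g ((x + y) / 2) \<ge> \<delta> \<bar>x - y\<bar>"
    and A_borel: "A \<in> sets borel"
  shows "\<forall>u\<ge>0. psi \<delta> u = 1 / (2 * tilde (measure (sigma_g g) A)) \<longrightarrow>
           boundary_measure (sigma_g g) A \<ge> ereal (tilde (measure (sigma_g g) A) * u)"
proof (intro allI impI)
  fix u :: real
  assume "u \<ge> 0" and psi_u: "psi \<delta> u = 1 / (2 * tilde (measure (sigma_g g) A))"
  interpret uniformly_convex_potential \<delta> g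
    by (rule uniformly_convex_potential.intro[OF delta_meas delta_nonneg phi_finite g_meas g_not_minf prob convex])
  define t where "t = tilde (measure (sigma_g g) A)"
  have t: "0 \<le> t" "t \<le> measure (sigma_g g) A" "t \<le> 1 - measure (sigma_g g) A"
    unfolding t_def tilde_def by auto
  have "2 * t * psi \<delta> u \<le> 1" using psi_u unfolding t_def by simp
  then have "\<epsilon> * (u * t / (1 + 2 * \<epsilon> * u)) \<le> measure (sigma_g g) (nbhd A \<epsilon>) - measure (sigma_g g) A"
    if "0 < \<epsilon>" for \<epsilon>
    using nbhd_increment_ge[OF A_borel t \<open>u \<ge> 0\<close> _ that] by blast
  moreover have "((\<lambda>\<epsilon>. u * t / (1 + 2 * \<epsilon> * u)) \<longlongrightarrow> u * t / (1 + 2 * 0 * u)) (at_right 0)"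
    by (intro tendsto_intros) auto
  ultimately have "ereal (u * t) \<le> boundary_measure (sigma_g g) A"
    using boundary_measure_ge[of "\<lambda>\<epsilon>. u * t / (1 + 2 * \<epsilon> * u)"] by simp
  then show "boundary_measure (sigma_g g) A \<ge> ereal (tilde (measure (sigma_g g) A) * u)"
    unfolding t_def by (simp add: mult.commute)
qed

end
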